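(* Fix an integer $\Lambda\ge2$ and let $G=(V,E)$ be a loopless series-parallel graph of maxmaxflow at most $\Lambda$. Let $\rho^\star_\Lambda$ be the unique solution in $(0,1)$ of $(1+\rho)^\Lambda=2(1+\rho^2)^{\Lambda-1}$ when $\Lambda\ge3$, and $\rho^\star_2=1$. Let $q\in\mathbb C$ satisfy $|q-1|\ge1/\rho^\star_\Lambda$ (strict inequality $>$ when $\Lambda=2$), put $\rho=1/|q-1|$ and $X=\big(2/(1+\rho)\big)^{1/(\Lambda-1)}$, and let the edge weights $\mathbf v=(v_e)_{e\in E}$ satisfy, for each $e$, either $v_e$ is real with $-1\le v_e\le0$, or $q+v_e\ne0$ and $\left|\dfrac{v_e}{q+v_e}\right|\le\rho\,\dfrac{X-1}{1-\rho X}$ (strict inequality in this second condition when $\Lambda=2$). Then $Z_G(q,\mathbf v)\neq0$.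
   Context: Multivariate Tutte polynomial of $G=(V,E)$: $Z_G(q,\mathbf v)=\sum_{A\subseteq E}q^{k(A)}\prod_{e\in A}v_e$, $k(A)$ = number of connected components of $(V,A)$. $\lambda_G(x,y)$ = maximum number of pairwise edge-disjoint $x$–$y$ paths; maxmaxflow $\Lambda(G)=\max_{x\ne y}\lambda_G(x,y)$ (0 if fewer than two vertices). A loopless graph is series-parallel if it can be obtained from a forest by a finite (possibly empty) sequence of operations, each replacing an edge by two edges in series (subdivision) or by two parallel edges. *)

theory Defs
  imports Complex_Main
begin

definition multigraph :: "'v set \<Rightarrow> 'e set \<Rightarrow> ('e \<Rightarrow> 'v \<times> 'v) \<Rightarrow> bool" where
  "multigraph V E ends \<longleftrightarrow> finite V \<and> finite E \<and> (\<forall>e\<in>E. fst (ends e) \<in> V \<and> snd (ends e) \<in> V)"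

definition loopless :: "'e set \<Rightarrow> ('e \<Rightarrow> 'v \<times> 'v) \<Rightarrow> bool" where
  "loopless E ends \<longleftrightarrow> (\<forall>e\<in>E. fst (ends e) \<noteq> snd (ends e))"

definition adj :: "'e set \<Rightarrow> ('e \<Rightarrow> 'v \<times> 'v) \<Rightarrow> ('v \<times> 'v) set" where
  "adj A ends = {(u, w). \<exists>e\<in>A. ends e = (u, w) \<or> ends e = (w, u)}"

definition conn :: "'v set \<Rightarrow> 'e set \<Rightarrow> ('e \<Rightarrow> 'v \<times> 'v) \<Rightarrow> ('v \<times> 'v) set" where
  "conn V A ends = (adj A ends)\<^sup>* \<inter> (V \<times> V)"

definition ncomp :: "'v set \<Rightarrow> 'e set \<Rightarrow> ('e \<Rightarrow> 'v \<times> 'v) \<Rightarrow> nat" where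
  "ncomp V A ends = card (V // conn V A ends)"

definition tutteZ :: "'v set \<Rightarrow> 'e set \<Rightarrow> ('e \<Rightarrow> 'v \<times> 'v) \<Rightarrow> complex \<Rightarrow> ('e \<Rightarrow> complex) \<Rightarrow> complex" where
  "tutteZ V E ends q v = (\<Sum>A\<in>Pow E. q ^ ncomp V A ends * (\<Prod>e\<in>A. v e))"

definition forest :: "'v set \<Rightarrow> 'e set \<Rightarrow> ('e \<Rightarrow> 'v \<times> 'v) \<Rightarrow> bool" where
  "forest V E ends \<longleftrightarrow> multigraph V E ends \<and>
     (\<forall>e\<in>E. (fst (ends e), snd (ends e)) \<notin> conn V (E - {e}) ends)"

inductive series_parallel :: "'v set \<Rightarrow> 'e set \<Rightarrow> ('e \<Rightarrow> 'v \<times> 'v) \<Rightarrow> bool" where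
  sp_forest: "forest V E ends \<Longrightarrow> series_parallel V E ends"
| sp_series: "\<lbrakk>series_parallel V E ends; e \<in> E; ends e = (a, b); w \<notin> V; e' \<notin> E\<rbrakk>
     \<Longrightarrow> series_parallel (insert w V) (insert e' E) (ends(e := (a, w), e' := (w, b)))"
| sp_parallel: "\<lbrakk>series_parallel V E ends; e \<in> E; e' \<notin> E\<rbrakk>
     \<Longrightarrow> series_parallel V (insert e' E) (ends(e' := ends e))"

definition is_path :: "'v set \<Rightarrow> 'e set \<Rightarrow> ('e \<Rightarrow> 'v \<times> 'v) \<Rightarrow> 'v \<Rightarrow> 'v \<Rightarrow> 'e list \<Rightarrow> bool" where
  "is_path V E ends x y es \<longleftrightarrow> (\<exists>vs. length vs = Suc (length es) \<and> vs ! 0 = x \<and>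
     vs ! length es = y \<and> distinct vs \<and> set vs \<subseteq> V \<and>
     (\<forall>i<length es. es ! i \<in> E \<and>
        (ends (es ! i) = (vs ! i, vs ! Suc i) \<or> ends (es ! i) = (vs ! Suc i, vs ! i))))"

definition local_edge_conn :: "'v set \<Rightarrow> 'e set \<Rightarrow> ('e \<Rightarrow> 'v \<times> 'v) \<Rightarrow> 'v \<Rightarrow> 'v \<Rightarrow> nat" where
  "local_edge_conn V E ends x y = Max {k. \<exists>P. length P = k \<and> (\<forall>p\<in>set P. is_path V E ends x y p) \<and>
      (\<forall>i<k. \<forall>j<k. i \<noteq> j \<longrightarrow> set (P ! i) \<inter> set (P ! j) = {})}"

definition maxmaxflow :: "'v set \<Rightarrow> 'e set \<Rightarrow> ('e \<Rightarrow> 'v \<times> 'v) \<Rightarrow> nat" where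
  "maxmaxflow V E ends = (if card V < 2 then 0 else
     Max {local_edge_conn V E ends x y | x y. x \<in> V \<and> y \<in> V \<and> x \<noteq> y})"

definition rho_star :: "nat \<Rightarrow> real" where
  "rho_star L = (if L = 2 then 1 else
     (THE r. 0 < r \<and> r < 1 \<and> (1 + r) ^ L = 2 * (1 + r\<^sup>2) ^ (L - 1)))"

end

theory Submission
  imports Defs "HOL-Library.Transitive_Closure_Table"
begin

text \<open>Undo the construction of the series-parallel graph one operation at a time, changing Z only
  by nonzero factors. With y = 1 + v and the transmissivity t = v / (q + v), two parallel edges
  merge into one with y = y1 y2, and two edges in series merge into one with t = t1 t2 while
  Z acquires the factor q + v1 + v2. A bridge splits off from Z and only needs q + v \<noteq> 0; for
  the other edges we keep the invariant that an edge standing for k edge-disjoint strands of the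
  original graph has y in [0,1] \<cdot> D(\<beta>_k), where D(\<beta>) = {|t| \<le> \<beta>} and
  \<beta>_k = (X^k - 1) / (|q - 1| - X^k). The bound on the maxmaxflow keeps k \<le> \<Lambda> - 1 for
  non-bridges, so all these sets lie in D(1/|q - 1|); parallel merging adds the levels k, and a
  series merge lands in D(\<rho>^2) \<subseteq> D(\<beta>_1), which is exactly the inequality defining \<rho>*.
  What remains at the end is a forest, whose Z is q^(|V| - |E|) times the product of the q + v_e.\<close>

section \<open>The constant rho_star\<close>

definition rho_star_log :: "nat \<Rightarrow> real \<Rightarrow> real" where
  "rho_star_log L r = real L * ln (1 + r) - (real L - 1) * ln (1 + r\<^sup>2)"

definition rho_star_numer :: "nat \<Rightarrow> real \<Rightarrow> real" where
  "rho_star_numer L r = real L - 2 * (real L - 1) * r - (real L - 2) * r\<^sup>2"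

lemma rho_star_log_has_derivative:
  assumes "r > -1"
  shows "(rho_star_log L has_real_derivative rho_star_numer L r / ((1 + r) * (1 + r\<^sup>2))) (at r)"
proof -
  have pos1: "1 + r > 0" using assms by simp
  have pos2: "1 + r\<^sup>2 > 0" by (simp add: add_pos_nonneg)
  have "(rho_star_log L has_real_derivative
      real L * (1 / (1 + r)) - (real L - 1) * (2 * r / (1 + r\<^sup>2))) (at r)"
    unfolding rho_star_log_def using pos1 pos2 by (auto intro!: derivative_eq_intros)
  moreover have "real L * (1 / (1 + r)) - (real L - 1) * (2 * r / (1 + r\<^sup>2))
      = rho_star_numer L r / ((1 + r) * (1 + r\<^sup>2))"
    using pos1 pos2 unfolding rho_star_numer_def by (simp add: field_simps power2_eq_square)
  ultimately show ?thesis by simp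
qed

lemma rho_star_numer_strict_decreasing:
  assumes "L \<ge> 2" "0 \<le> s" "s < t"
  shows "rho_star_numer L t < rho_star_numer L s"
proof -
  have "rho_star_numer L s - rho_star_numer L t
      = 2 * (real L - 1) * (t - s) + (real L - 2) * (t\<^sup>2 - s\<^sup>2)"
    unfolding rho_star_numer_def by (simp add: algebra_simps)
  moreover have "2 * (real L - 1) * (t - s) > 0" using assms by simp
  moreover have "(real L - 2) * (t\<^sup>2 - s\<^sup>2) \<ge> 0"
    using assms by (intro mult_nonneg_nonneg) (auto intro: power_mono)
  ultimately show ?thesis by linarith
qed

lemma rho_star_log_le_iff:
  assumes "r \<ge> 0" "L \<ge> 1"
  shows "(1 + r) ^ L \<le> 2 * (1 + r\<^sup>2) ^ (L - 1) \<longleftrightarrow> rho_star_log L r \<le> ln 2"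
    and "(1 + r) ^ L = 2 * (1 + r\<^sup>2) ^ (L - 1) \<longleftrightarrow> rho_star_log L r = ln 2"
proof -
  have pos: "(1 + r) ^ L > 0" "2 * (1 + r\<^sup>2) ^ (L - 1) > 0"
    using assms by (simp_all add: add_pos_nonneg)
  have "ln ((1 + r) ^ L) = real L * ln (1 + r)" using assms by (simp add: ln_realpow)
  moreover have "ln (2 * (1 + r\<^sup>2) ^ (L - 1)) = ln 2 + (real L - 1) * ln (1 + r\<^sup>2)"
    using assms add_pos_nonneg[of 1 "r\<^sup>2"] by (simp add: ln_mult ln_realpow of_nat_diff)
  ultimately have "ln ((1 + r) ^ L) - ln (2 * (1 + r\<^sup>2) ^ (L - 1)) = rho_star_log L r - ln 2"
    unfolding rho_star_log_def by simp
  then show "(1 + r) ^ L \<le> 2 * (1 + r\<^sup>2) ^ (L - 1) \<longleftrightarrow> rho_star_log L r \<le> ln 2"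
    and "(1 + r) ^ L = 2 * (1 + r\<^sup>2) ^ (L - 1) \<longleftrightarrow> rho_star_log L r = ln 2"
    using ln_le_cancel_iff[OF pos] ln_inj_iff[OF pos] by linarith+
qed

lemma rho_star_log_half_gt:
  assumes "L \<ge> 3" shows "rho_star_log L (1/2) > ln 2"
proof -
  have "2 * (1 + (1/2::real)\<^sup>2) ^ (L - 1) < (1 + 1/2) ^ L"
    using assms
  proof (induction L rule: nat_induct_at_least)
    case base then show ?case by (simp add: power2_eq_square eval_nat_numeral)
  next
    case (Suc n)
    have "2 * (1 + (1/2::real)\<^sup>2) ^ (Suc n - 1) = (5/4) * (2 * (1 + (1/2::real)\<^sup>2) ^ (n - 1))"
      using Suc by (cases n) (auto simp: power2_eq_square)
    also have "\<dots> < (5/4) * (1 + 1/2) ^ n" using Suc by simp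
    also have "\<dots> \<le> (1 + 1/2) ^ Suc n" by simp
    finally show ?case .
  qed
  then show ?thesis using rho_star_log_le_iff(1)[of "1/2" L] assms by simp
qed

text \<open>Since rho_star_log L 1 = ln 2, two solutions of rho_star_log L r = ln 2 in (0,1)
  would give, by the mean value theorem, two zeros of the strictly decreasing numerator of
  the derivative.\<close>

lemma rho_star_log_eq_ln2_unique:
  assumes L: "L \<ge> 3" and a: "0 < a" "a < 1" "rho_star_log L a = ln 2"
    and b: "0 < b" "b < 1" "rho_star_log L b = ln 2"
  shows "a = b"
proof -
  have numer_zero: "\<exists>z. x < z \<and> z < y \<and> rho_star_numer L z = 0"
    if x: "0 \<le> x" "x < y" "rho_star_log L x = rho_star_log L y" for x y
  proof -
    define d where "d t = rho_star_numer L t / ((1 + t) * (1 + t\<^sup>2))" for t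
    have "(rho_star_log L has_real_derivative d t) (at t)" if "x \<le> t" for t
      unfolding d_def using x that by (intro rho_star_log_has_derivative) simp
    then obtain z where z: "x < z" "z < y" "rho_star_log L y - rho_star_log L x = (y - x) * d z"
      using MVT2[OF x(2)] by blast
    then have "d z = 0" using x by simp
    moreover have "(1 + z) * (1 + z\<^sup>2) > 0" using z x by (simp add: add_pos_nonneg)
    ultimately show ?thesis using z unfolding d_def by auto
  qed
  have "False" if xy: "0 < x" "x < y" "y < 1" "rho_star_log L x = ln 2" "rho_star_log L y = ln 2" for x y
  proof -
    have one: "rho_star_log L 1 = ln 2" using L by (simp add: rho_star_log_def algebra_simps)
    obtain z1 where "x < z1" "z1 < y" "rho_star_numer L z1 = 0" using numer_zero[of x y] xy by auto
    moreover obtain z2 where "y < z2" "rho_star_numer L z2 = 0"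
      using numer_zero[of y 1] xy one by auto
    ultimately show False using rho_star_numer_strict_decreasing[of L z1 z2] L xy by simp
  qed
  then show ?thesis using a b by (cases a b rule: linorder_cases) auto
qed

lemma
  assumes L: "L \<ge> 3"
  shows rho_star_pos: "0 < rho_star L" and rho_star_lt_1: "rho_star L < 1"
    and rho_star_ineq: "\<And>r. 0 \<le> r \<Longrightarrow> r \<le> rho_star L \<Longrightarrow>
      (1 + r) ^ L \<le> 2 * (1 + r\<^sup>2) ^ (L - 1)"
proof -
  define P where "P r \<longleftrightarrow> 0 < r \<and> r < 1 \<and> rho_star_log L r = ln 2" for r
  have P_iff: "P r \<longleftrightarrow> 0 < r \<and> r < 1 \<and> (1 + r) ^ L = 2 * (1 + r\<^sup>2) ^ (L - 1)" for r
    unfolding P_def using rho_star_log_le_iff(2)[of r L] L by auto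
  have zero: "rho_star_log L 0 = 0" by (simp add: rho_star_log_def)
  have root_below: "\<exists>r. 0 < r \<and> r \<le> b \<and> rho_star_log L r = ln 2"
    if b: "0 \<le> b" "ln 2 \<le> rho_star_log L b" for b
  proof -
    have "\<forall>x. 0 \<le> x \<and> x \<le> b \<longrightarrow> isCont (rho_star_log L) x"
      using DERIV_isCont[OF rho_star_log_has_derivative] by simp
    then obtain r where r: "0 \<le> r" "r \<le> b" "rho_star_log L r = ln 2"
      using IVT[of "rho_star_log L" 0 "ln 2" b] b zero by auto
    then have "r \<noteq> 0" using zero by auto
    with r show ?thesis by (intro exI[of _ r]) simp
  qed
  obtain r0 where r0: "0 < r0" "r0 \<le> 1/2" "rho_star_log L r0 = ln 2"
    using root_below[of "1/2"] rho_star_log_half_gt[OF L] by auto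
  have "P r0" using r0 by (simp add: P_def)
  moreover have "r = r0" if "P r" for r
    using rho_star_log_eq_ln2_unique[OF L] that r0 unfolding P_def by auto
  ultimately have "(THE r. P r) = r0" by (rule the_equality)
  moreover have "rho_star L = (THE r. P r)"
    using L unfolding rho_star_def P_iff by simp
  ultimately have eq: "rho_star L = r0" by simp
  show "0 < rho_star L" "rho_star L < 1" using eq r0 by auto
  show "(1 + r) ^ L \<le> 2 * (1 + r\<^sup>2) ^ (L - 1)" if r: "0 \<le> r" "r \<le> rho_star L" for r
  proof (rule ccontr)
    assume "\<not> ?thesis"
    then have "rho_star_log L r > ln 2" using rho_star_log_le_iff(1)[of r L] r L by simp
    then obtain r1 where "0 < r1" "r1 \<le> r" "rho_star_log L r1 = ln 2"
      using root_below[of r] r by auto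
    moreover have "r \<noteq> r0" using r0 \<open>rho_star_log L r > ln 2\<close> by auto
    ultimately show False
      using rho_star_log_eq_ln2_unique[OF L, of r1 r0] r r0 eq by auto
  qed
qed


section \<open>Connected components\<close>

lemma adj_insert: "adj (insert e A) ends = insert (ends e) (insert (prod.swap (ends e)) (adj A ends))"
  unfolding adj_def by (cases "ends e") auto

lemma adj_cong: "(\<And>e. e \<in> A \<Longrightarrow> ends e = ends' e) \<Longrightarrow> adj A ends = adj A ends'"
  unfolding adj_def by auto

lemma adj_mono: "A \<subseteq> B \<Longrightarrow> adj A ends \<subseteq> adj B ends"
  unfolding adj_def by auto

lemma sym_adj: "sym (adj A ends)"
  unfolding adj_def sym_def by auto

lemma ends_in_adj: "f \<in> A \<Longrightarrow> ends f \<in> adj A ends"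
  unfolding adj_def by (cases "ends f") auto

lemma ends_in_adj_swap: "f \<in> A \<Longrightarrow> prod.swap (ends f) \<in> adj A ends"
  unfolding adj_def by (cases "ends f") auto

lemma sym_insert_pair: "sym r \<Longrightarrow> sym (insert (x, y) (insert (y, x) r))"
  unfolding sym_def by auto

lemma adj_subset: "multigraph V E ends \<Longrightarrow> A \<subseteq> E \<Longrightarrow> adj A ends \<subseteq> V \<times> V"
  unfolding adj_def multigraph_def by (force)

lemma sym_rtranclD: "sym r \<Longrightarrow> (x, y) \<in> r\<^sup>* \<Longrightarrow> (y, x) \<in> r\<^sup>*"
  using sym_rtrancl[of r] unfolding sym_def by blast

lemma equiv_rtrancl_restrict: assumes "sym r" shows "equiv V (r\<^sup>* \<inter> V \<times> V)"
proof -
  have s: "sym (r\<^sup>*)" using assms by (rule sym_rtrancl)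
  show ?thesis unfolding equiv_def refl_on_def trans_def using s
    by (auto simp: sym_def intro: rtrancl_trans)
qed

lemma quotient_eq_image: "A // r = (\<lambda>x. r `` {x}) ` A"
  unfolding quotient_def by auto

lemma ncomp_cong_adj: "adj A ends = adj A' ends' \<Longrightarrow> ncomp V A ends = ncomp V A' ends'"
  unfolding ncomp_def conn_def by simp

lemma card_quotient_insert_isolated:
  assumes fin: "finite V" and w: "w \<notin> V" and r: "r \<subseteq> V \<times> V"
  shows "card (insert w V // (r\<^sup>* \<inter> insert w V \<times> insert w V)) = Suc (card (V // (r\<^sup>* \<inter> V \<times> V)))"
proof -
  have wcl: "y = w" if "(w, y) \<in> r\<^sup>*" for y
    using that
  proof (induction rule: rtrancl_induct)
    case (step y z) then show ?case using r w by auto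
  qed simp
  have xcl: "y \<in> V" if "(x, y) \<in> r\<^sup>*" "x \<in> V" for x y
    using that
  proof (induction rule: rtrancl_induct)
    case (step y z) then show ?case using r by auto
  qed simp
  define R' where "R' = r\<^sup>* \<inter> insert w V \<times> insert w V"
  define R where "R = r\<^sup>* \<inter> V \<times> V"
  have c1: "R' `` {w} = {w}" unfolding R'_def using wcl by auto
  have c2: "R' `` {x} = R `` {x}" if "x \<in> V" for x
    unfolding R'_def R_def using xcl[OF _ that] that by auto
  have "insert w V // R' = insert {w} (V // R)"
    unfolding quotient_eq_image using c1 c2 by auto
  moreover have "{w} \<notin> V // R"
  proof
    assume "{w} \<in> V // R"
    then obtain x where "x \<in> V" "{w} = R `` {x}" unfolding quotient_eq_image by auto
    then have "w \<in> V" unfolding R_def by auto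
    then show False using w by simp
  qed
  moreover have "finite (V // R)" unfolding R_def using fin by (intro finite_quotient) auto
  ultimately show ?thesis unfolding R'_def[symmetric] R_def[symmetric] by simp
qed

lemma image_equiv_class:
  assumes f: "f ` V' = W"
    and iff: "\<And>x y. x \<in> V' \<Longrightarrow> y \<in> V' \<Longrightarrow> (x, y) \<in> R' \<longleftrightarrow> (f x, f y) \<in> R"
    and e1: "equiv V' R'" and e2: "equiv W R"
    and x: "x \<in> V'"
  shows "f ` (R' `` {x}) = R `` {f x}"
proof -
  have sub1: "R' \<subseteq> V' \<times> V'" using e1 unfolding equiv_def refl_on_def by auto
  have sub2: "R \<subseteq> W \<times> W" using e2 unfolding equiv_def refl_on_def by auto
  show ?thesis
  proof
    show "f ` (R' `` {x}) \<subseteq> R `` {f x}"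
    proof
      fix z assume "z \<in> f ` (R' `` {x})"
      then obtain y where y: "(x, y) \<in> R'" "z = f y" by auto
      then have "y \<in> V'" using sub1 by auto
      then show "z \<in> R `` {f x}" using iff[OF x] y by auto
    qed
  next
    show "R `` {f x} \<subseteq> f ` (R' `` {x})"
    proof
      fix z assume "z \<in> R `` {f x}"
      then have z: "(f x, z) \<in> R" by auto
      then have "z \<in> W" using sub2 by auto
      then obtain y where y: "y \<in> V'" "z = f y" using f by auto
      then have "(x, y) \<in> R'" using iff[OF x y(1)] z by simp
      then show "z \<in> f ` (R' `` {x})" using y by auto
    qed
  qed
qed

lemma card_quotient_eq_of_map:
  assumes f: "f ` V' = W"
    and iff: "\<And>x y. x \<in> V' \<Longrightarrow> y \<in> V' \<Longrightarrow> (x, y) \<in> R' \<longleftrightarrow> (f x, f y) \<in> R"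
    and e1: "equiv V' R'" and e2: "equiv W R"
  shows "card (V' // R') = card (W // R)"
proof -
  note cl = image_equiv_class[OF f iff e1 e2]
  have img: "(\<lambda>C. f ` C) ` (V' // R') = W // R"
  proof -
    have "(\<lambda>C. f ` C) ` (V' // R') = (\<lambda>x. R `` {f x}) ` V'"
      unfolding quotient_eq_image image_image using cl by (auto simp: image_iff)
    also have "\<dots> = (\<lambda>z. R `` {z}) ` (f ` V')" by (simp add: image_image)
    also have "\<dots> = W // R" using f by (simp add: quotient_eq_image)
    finally show ?thesis .
  qed
  have inj: "inj_on (\<lambda>C. f ` C) (V' // R')"
  proof (rule inj_onI)
    fix C1 C2 assume C1: "C1 \<in> V' // R'" and C2: "C2 \<in> V' // R'" and eq: "f ` C1 = f ` C2"
    obtain x1 where x1: "x1 \<in> V'" "C1 = R' `` {x1}" using C1 unfolding quotient_eq_image by auto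
    obtain x2 where x2: "x2 \<in> V'" "C2 = R' `` {x2}" using C2 unfolding quotient_eq_image by auto
    have "R `` {f x1} = R `` {f x2}" using eq x1 x2 cl by simp
    moreover have "f x2 \<in> W" using f x2 by auto
    ultimately have "(f x1, f x2) \<in> R" using e2 unfolding equiv_def refl_on_def by auto
    then have "(x1, x2) \<in> R'" using iff x1 x2 by auto
    then show "C1 = C2" using x1 x2 equiv_class_eq[OF e1] by simp
  qed
  show ?thesis using card_image[OF inj] img by simp
qed

lemma card_quotient_contract:
  assumes w: "w \<notin> V" and a: "a \<in> V" and r: "r \<subseteq> V \<times> V" and sr: "sym r" and sr': "sym r'"
    and sub: "r \<subseteq> r'\<^sup>*" and aw: "(a, w) \<in> r'\<^sup>*"
    and step: "\<And>x y. (x, y) \<in> r' \<Longrightarrow> ((if x = w then a else x), (if y = w then a else y)) \<in> r\<^sup>*"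
  shows "card (insert w V // (r'\<^sup>* \<inter> insert w V \<times> insert w V)) = card (V // (r\<^sup>* \<inter> V \<times> V))"
proof -
  define f where "f x = (if x = w then a else x)" for x
  have fwd: "(f x, f y) \<in> r\<^sup>*" if "(x, y) \<in> r'\<^sup>*" for x y
    using that
  proof (induction rule: rtrancl_induct)
    case (step y z)
    then show ?case using step(3) step.hyps(2)[THEN assms(8)] unfolding f_def
      by (meson rtrancl_trans)
  qed simp
  have rr: "r\<^sup>* \<subseteq> r'\<^sup>*" using sub by (simp add: rtrancl_subset_rtrancl)
  have xf: "(x, f x) \<in> r'\<^sup>*" for x using sym_rtranclD[OF sr' aw] unfolding f_def by auto
  have fx: "(f x, x) \<in> r'\<^sup>*" for x using aw unfolding f_def by auto
  have bwd: "(x, y) \<in> r'\<^sup>*" if "(f x, f y) \<in> r\<^sup>*" for x y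
    using xf[of x] rr that fx[of y] by (meson rtrancl_trans subsetD)
  show ?thesis
  proof (rule card_quotient_eq_of_map[where f = f])
    show "f ` insert w V = V" unfolding f_def using a w by (auto simp: image_iff)
    show "equiv (insert w V) (r'\<^sup>* \<inter> insert w V \<times> insert w V)" by (rule equiv_rtrancl_restrict[OF sr'])
    show "equiv V (r\<^sup>* \<inter> V \<times> V)" by (rule equiv_rtrancl_restrict[OF sr])
    fix x y assume "x \<in> insert w V" "y \<in> insert w V"
    then have "f x \<in> V" "f y \<in> V" unfolding f_def using a by auto
    then show "((x, y) \<in> r'\<^sup>* \<inter> insert w V \<times> insert w V) = ((f x, f y) \<in> r\<^sup>* \<inter> V \<times> V)"
      using fwd bwd \<open>x \<in> insert w V\<close> \<open>y \<in> insert w V\<close> by auto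
  qed
qed

lemma card_quotient_pendant:
  assumes w: "w \<notin> V" and a: "a \<in> V" and r: "r \<subseteq> V \<times> V" and sr: "sym r"
  shows "card (insert w V // ((insert (a, w) (insert (w, a) r))\<^sup>* \<inter> insert w V \<times> insert w V))
    = card (V // (r\<^sup>* \<inter> V \<times> V))"
proof (rule card_quotient_contract[OF w a r sr sym_insert_pair[OF sr]])
  show "r \<subseteq> (insert (a, w) (insert (w, a) r))\<^sup>*" "(a, w) \<in> (insert (a, w) (insert (w, a) r))\<^sup>*"
    by auto
  fix x y assume "(x, y) \<in> insert (a, w) (insert (w, a) r)"
  then show "(if x = w then a else x, if y = w then a else y) \<in> r\<^sup>*" using r w a by auto
qed

lemma rtrancl_insert_pair_cases:
  assumes sr: "sym r" and "(x, y) \<in> (insert (a, b) (insert (b, a) r))\<^sup>*"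
  shows "(x, y) \<in> r\<^sup>* \<or> ((x, a) \<in> r\<^sup>* \<and> (b, y) \<in> r\<^sup>*) \<or>
    ((x, b) \<in> r\<^sup>* \<and> (a, y) \<in> r\<^sup>*)"
  using assms(2)
proof (induction rule: rtrancl_induct)
  case base then show ?case by simp
next
  case (step y z)
  from step.hyps(2) consider "(y, z) = (a, b)" | "(y, z) = (b, a)" | "(y, z) \<in> r" by auto
  then show ?case
  proof cases
    case 1 then show ?thesis using step.IH sym_rtranclD[OF sr] by (auto intro: rtrancl_trans)
  next
    case 2 then show ?thesis using step.IH sym_rtranclD[OF sr] by (auto intro: rtrancl_trans)
  next
    case 3 then show ?thesis using step.IH by (auto intro: rtrancl_into_rtrancl)
  qed
qed

lemma Image_class_coarser:
  assumes "equiv V R" "equiv V R2" "R \<subseteq> R2" "x \<in> V"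
  shows "R2 `` (R `` {x}) = R2 `` {x}"
proof
  show "R2 `` (R `` {x}) \<subseteq> R2 `` {x}" using assms(2,3) unfolding equiv_def trans_def by blast
  show "R2 `` {x} \<subseteq> R2 `` (R `` {x})" using assms(1,4) unfolding equiv_def refl_on_def by blast
qed

text \<open>Joining two components by an edge (a, b): every class of the coarser relation is the
  image of exactly one class other than that of b.\<close>

lemma
  assumes sr: "sym r" and a: "a \<in> V" and b: "b \<in> V" and nab: "(a, b) \<notin> r\<^sup>*"
  defines "R \<equiv> r\<^sup>* \<inter> V \<times> V" and "R2 \<equiv> (insert (a, b) (insert (b, a) r))\<^sup>* \<inter> V \<times> V"
  shows quotient_join_eq_image: "(\<lambda>C. R2 `` C) ` (V // R - {R `` {b}}) = V // R2"
    and inj_on_quotient_join: "inj_on (\<lambda>C. R2 `` C) (V // R - {R `` {b}})"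
proof -
  define r2 where "r2 = insert (a, b) (insert (b, a) r)"
  have eR: "equiv V R" unfolding R_def by (rule equiv_rtrancl_restrict[OF sr])
  have eR2: "equiv V R2" unfolding R2_def by (rule equiv_rtrancl_restrict[OF sym_insert_pair[OF sr]])
  have rr: "r\<^sup>* \<subseteq> r2\<^sup>*" unfolding r2_def by (rule rtrancl_mono) auto
  then have "R \<subseteq> R2" unfolding R_def R2_def r2_def by auto
  note h = Image_class_coarser[OF eR eR2 this]
  have clb: "R `` {x} = R `` {b} \<longleftrightarrow> (x, b) \<in> r\<^sup>*" if "x \<in> V" for x
    using equiv_class_eq_iff[OF eR, of x b] that b unfolding R_def by auto
  show "(\<lambda>C. R2 `` C) ` (V // R - {R `` {b}}) = V // R2"
  proof
    show "(\<lambda>C. R2 `` C) ` (V // R - {R `` {b}}) \<subseteq> V // R2"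
      unfolding quotient_eq_image using h by auto
    show "V // R2 \<subseteq> (\<lambda>C. R2 `` C) ` (V // R - {R `` {b}})"
    proof
      fix C assume "C \<in> V // R2"
      then obtain x where x: "x \<in> V" "C = R2 `` {x}" unfolding quotient_eq_image by auto
      obtain x' where x': "x' \<in> V" "R2 `` {x'} = R2 `` {x}" "R `` {x'} \<noteq> R `` {b}"
      proof (cases "R `` {x} = R `` {b}")
        case True
        then have "(x, b) \<in> r\<^sup>*" using clb x by simp
        then have "(x, a) \<in> r2\<^sup>*" using rr unfolding r2_def
          by (meson insertI1 insertI2 r_into_rtrancl rtrancl_trans subsetD)
        then have "R2 `` {a} = R2 `` {x}"
          using equiv_class_eq[OF eR2] x a unfolding R2_def r2_def by auto
        then show ?thesis using that[of a] a clb[OF a] nab by simp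
      qed (use x in auto)
      then have "R `` {x'} \<in> V // R - {R `` {b}}" unfolding quotient_eq_image by auto
      then show "C \<in> (\<lambda>C. R2 `` C) ` (V // R - {R `` {b}})" using x x' h[OF x'(1)] by (metis image_eqI)
    qed
  qed
  show "inj_on (\<lambda>C. R2 `` C) (V // R - {R `` {b}})"
  proof (rule inj_onI)
    fix C1 C2 assume C1: "C1 \<in> V // R - {R `` {b}}" and C2: "C2 \<in> V // R - {R `` {b}}"
      and eq: "R2 `` C1 = R2 `` C2"
    obtain x1 where x1: "x1 \<in> V" "C1 = R `` {x1}" using C1 unfolding quotient_eq_image by auto
    obtain x2 where x2: "x2 \<in> V" "C2 = R `` {x2}" using C2 unfolding quotient_eq_image by auto
    have n: "(x1, b) \<notin> r\<^sup>*" "(x2, b) \<notin> r\<^sup>*" using clb x1 x2 C1 C2 by auto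
    have "R2 `` {x1} = R2 `` {x2}" using eq h x1 x2 by simp
    then have "(x1, x2) \<in> r2\<^sup>*" using eR2 x2 unfolding equiv_def refl_on_def R2_def r2_def by auto
    then have "(x1, x2) \<in> r\<^sup>*"
      using rtrancl_insert_pair_cases[OF sr, of x1 x2 a b] n sym_rtranclD[OF sr] unfolding r2_def by blast
    then show "C1 = C2" using x1 x2 equiv_class_eq[OF eR] unfolding R_def by simp
  qed
qed

lemma card_quotient_join:
  assumes fin: "finite V" and sr: "sym r" and a: "a \<in> V" and b: "b \<in> V"
    and nab: "(a, b) \<notin> r\<^sup>*"
  shows "Suc (card (V // ((insert (a, b) (insert (b, a) r))\<^sup>* \<inter> V \<times> V)))
    = card (V // (r\<^sup>* \<inter> V \<times> V))"
proof -
  define R where "R = r\<^sup>* \<inter> V \<times> V"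
  have fin_quot: "finite (V // R)" unfolding R_def using fin by (intro finite_quotient) auto
  have b_class: "R `` {b} \<in> V // R" unfolding quotient_eq_image using b by auto
  have "card (V // ((insert (a, b) (insert (b, a) r))\<^sup>* \<inter> V \<times> V)) = card (V // R - {R `` {b}})"
    using card_image[OF inj_on_quotient_join[OF sr a b nab]] quotient_join_eq_image[OF sr a b nab]
    unfolding R_def by simp
  also have "\<dots> = card (V // R) - 1" using b_class fin_quot by simp
  finally show ?thesis using b_class fin_quot unfolding R_def[symmetric]
    by (metis Suc_diff_1 card_gt_0_iff empty_iff)
qed


section \<open>Recurrences for Z\<close>

lemma sum_Pow_remove:
  assumes "finite E" "e \<in> E"
  shows "(\<Sum>A\<in>Pow E. g A) = (\<Sum>B\<in>Pow (E - {e}). g B + g (insert e B))"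
proof -
  have E: "E = insert e (E - {e})" using assms by auto
  have inj: "inj_on (insert e) (Pow (E - {e}))" by (rule inj_onI) auto
  have "(\<Sum>A\<in>Pow E. g A) = (\<Sum>A\<in>Pow (E - {e}) \<union> insert e ` Pow (E - {e}). g A)"
    by (subst E) (simp only: Pow_insert)
  also have "\<dots> = (\<Sum>A\<in>Pow (E - {e}). g A) + (\<Sum>A\<in>insert e ` Pow (E - {e}). g A)"
    using assms by (intro sum.union_disjoint) auto
  also have "(\<Sum>A\<in>insert e ` Pow (E - {e}). g A) = (\<Sum>B\<in>Pow (E - {e}). g (insert e B))"
    using inj by (simp add: sum.reindex)
  finally show ?thesis by (simp add: sum.distrib)
qed

lemma tutteZ_fun_upd_expand:
  assumes fin: "finite E" and e: "e \<in> E"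
  shows "tutteZ V E ends q (v(e := x)) = (\<Sum>B\<in>Pow (E - {e}). (\<Prod>f\<in>B. v f) *
           (q ^ ncomp V B ends + x * q ^ ncomp V (insert e B) ends))"
  unfolding tutteZ_def sum_Pow_remove[OF assms]
proof (rule sum.cong)
  fix B assume "B \<in> Pow (E - {e})"
  then have B: "finite B" "e \<notin> B" using fin finite_subset by auto
  then have "(\<Prod>f\<in>B. (v(e := x)) f) = (\<Prod>f\<in>B. v f)" by (intro prod.cong) auto
  then show "q ^ ncomp V B ends * (\<Prod>f\<in>B. (v(e := x)) f) +
      q ^ ncomp V (insert e B) ends * (\<Prod>f\<in>insert e B. (v(e := x)) f) =
      (\<Prod>f\<in>B. v f) * (q ^ ncomp V B ends + x * q ^ ncomp V (insert e B) ends)"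
    using B by (simp add: algebra_simps)
qed simp

lemma tutteZ_expand_edge:
  assumes "finite E" "e \<in> E"
  shows "tutteZ V E ends q v = (\<Sum>B\<in>Pow (E - {e}). (\<Prod>f\<in>B. v f) *
           (q ^ ncomp V B ends + v e * q ^ ncomp V (insert e B) ends))"
  using tutteZ_fun_upd_expand[OF assms, of V ends q v "v e"] by simp

lemma tutteZ_parallel:
  assumes fin: "finite E" and e: "e \<in> E" and e': "e' \<notin> E"
  shows "tutteZ V (insert e' E) (ends(e' := ends e)) q v
    = tutteZ V E ends q (v(e := v e + v e' + v e * v e'))"
proof -
  define ends' where "ends' = ends(e' := ends e)"
  define c where "c B = ncomp V B ends" for B
  have ee: "e \<noteq> e'" using e e' by auto
  have c: "ncomp V B ends' = c B" "ncomp V (insert e' B) ends' = c (insert e B)"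
    "ncomp V (insert e B) ends' = c (insert e B)" "ncomp V (insert e' (insert e B)) ends' = c (insert e B)"
    if "B \<subseteq> E - {e}" for B
  proof -
    have "adj B ends' = adj B ends" unfolding ends'_def using that e' by (intro adj_cong) auto
    moreover have "ends' e = ends e" "ends' e' = ends e" unfolding ends'_def using ee by auto
    ultimately show "ncomp V B ends' = c B" "ncomp V (insert e' B) ends' = c (insert e B)"
      "ncomp V (insert e B) ends' = c (insert e B)" "ncomp V (insert e' (insert e B)) ends' = c (insert e B)"
      unfolding c_def by (auto intro!: ncomp_cong_adj simp: adj_insert)
  qed
  have "tutteZ V (insert e' E) ends' q v = (\<Sum>A\<in>Pow E. (\<Prod>f\<in>A. v f) *
           (q ^ ncomp V A ends' + v e' * q ^ ncomp V (insert e' A) ends'))"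
    using tutteZ_expand_edge[of "insert e' E" e' V ends' q v] fin e' by simp
  also have "\<dots> = (\<Sum>B\<in>Pow (E - {e}). (\<Prod>f\<in>B. v f) *
           (q ^ ncomp V B ends' + v e' * q ^ ncomp V (insert e' B) ends') +
           (\<Prod>f\<in>insert e B. v f) *
           (q ^ ncomp V (insert e B) ends' + v e' * q ^ ncomp V (insert e' (insert e B)) ends'))"
    by (rule sum_Pow_remove[OF fin e])
  also have "\<dots> = (\<Sum>B\<in>Pow (E - {e}). (\<Prod>f\<in>B. v f) *
           (q ^ c B + (v e + v e' + v e * v e') * q ^ c (insert e B)))"
  proof (rule sum.cong)
    fix B assume B: "B \<in> Pow (E - {e})"
    then have "finite B" "e \<notin> B" using fin finite_subset by auto
    then show "(\<Prod>f\<in>B. v f) * (q ^ ncomp V B ends' + v e' * q ^ ncomp V (insert e' B) ends') +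
           (\<Prod>f\<in>insert e B. v f) *
           (q ^ ncomp V (insert e B) ends' + v e' * q ^ ncomp V (insert e' (insert e B)) ends') =
          (\<Prod>f\<in>B. v f) * (q ^ c B + (v e + v e' + v e * v e') * q ^ c (insert e B))"
      using c B by (simp add: algebra_simps)
  qed simp
  also have "\<dots> = tutteZ V E ends q (v(e := v e + v e' + v e * v e'))"
    unfolding c_def by (rule tutteZ_fun_upd_expand[OF fin e, symmetric])
  finally show ?thesis unfolding ends'_def .
qed

lemma ncomp_subdivide:
  assumes mg: "multigraph V E ends" and e: "e \<in> E" and ab: "ends e = (a, b)" and w: "w \<notin> V"
    and e': "e' \<notin> E" and B: "B \<subseteq> E - {e}"
  defines "V' \<equiv> insert w V" and "ends' \<equiv> ends(e := (a, w), e' := (w, b))"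
  shows "ncomp V' B ends' = Suc (ncomp V B ends)"
    and "ncomp V' (insert e B) ends' = ncomp V B ends"
    and "ncomp V' (insert e' B) ends' = ncomp V B ends"
    and "ncomp V' (insert e' (insert e B)) ends' = ncomp V (insert e B) ends"
proof -
  have fin: "finite V" using mg unfolding multigraph_def by auto
  have aV: "a \<in> V" and bV: "b \<in> V" using mg e ab unfolding multigraph_def by force+
  have ee: "e \<noteq> e'" using e e' by auto
  have aw: "a \<noteq> w" "b \<noteq> w" using aV bV w by auto
  have ends'e: "ends' e = (a, w)" and ends'e': "ends' e' = (w, b)" unfolding ends'_def using ee by auto
  define r where "r = adj B ends"
  have r: "r \<subseteq> V \<times> V" unfolding r_def using adj_subset[OF mg] B by auto
  have sr: "sym r" unfolding r_def by (rule sym_adj)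
  have adjB: "adj B ends' = r" unfolding r_def ends'_def using B e' by (intro adj_cong) auto
  have rV: "x \<noteq> w" "y \<noteq> w" if "(x, y) \<in> r" for x y using that r w by auto
  show "ncomp V' B ends' = Suc (ncomp V B ends)"
    unfolding ncomp_def conn_def V'_def adjB using card_quotient_insert_isolated[OF fin w r] r_def by simp
  have "adj (insert e B) ends' = insert (a, w) (insert (w, a) r)"
    using adjB ends'e by (simp add: adj_insert)
  then show "ncomp V' (insert e B) ends' = ncomp V B ends"
    using card_quotient_pendant[OF w aV r sr] unfolding ncomp_def conn_def V'_def r_def by simp
  have "adj (insert e' B) ends' = insert (b, w) (insert (w, b) r)"
    using adjB ends'e' by (auto simp add: adj_insert)
  then show "ncomp V' (insert e' B) ends' = ncomp V B ends"
    using card_quotient_pendant[OF w bV r sr] unfolding ncomp_def conn_def V'_def r_def by simp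
  show "ncomp V' (insert e' (insert e B)) ends' = ncomp V (insert e B) ends"
  proof -
    define r' where "r' = insert (a, w) (insert (w, a) (insert (w, b) (insert (b, w) r)))"
    define r2 where "r2 = insert (a, b) (insert (b, a) r)"
    have eq1: "adj (insert e' (insert e B)) ends' = r'" using adjB ends'e ends'e' unfolding r'_def
      by (auto simp add: adj_insert)
    have eq2: "adj (insert e B) ends = r2" unfolding r2_def r_def using ab by (simp add: adj_insert)
    have r2: "r2 \<subseteq> V \<times> V" unfolding r2_def using r aV bV by auto
    have "card (insert w V // (r'\<^sup>* \<inter> insert w V \<times> insert w V)) = card (V // (r2\<^sup>* \<inter> V \<times> V))"
    proof (rule card_quotient_contract[OF w aV r2])
      show "sym r2" unfolding r2_def by (rule sym_insert_pair[OF sr])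
      show "sym r'" unfolding r'_def by (intro sym_insert_pair sr)
      have "(a, b) \<in> r'\<^sup>*" unfolding r'_def
        by (meson insertCI r_into_rtrancl rtrancl_trans)
      moreover have "(b, a) \<in> r'\<^sup>*" unfolding r'_def
        by (meson insertCI r_into_rtrancl rtrancl_trans)
      ultimately show "r2 \<subseteq> r'\<^sup>*" unfolding r2_def r'_def by auto
      show "(a, w) \<in> r'\<^sup>*" unfolding r'_def by auto
      fix x y assume "(x, y) \<in> r'"
      then show "(if x = w then a else x, if y = w then a else y) \<in> r2\<^sup>*"
        unfolding r'_def r2_def using rV aw by auto
    qed
    then show ?thesis using eq1 eq2 unfolding ncomp_def conn_def V'_def by simp
  qed
qed


lemma tutteZ_series_expand:
  assumes mg: "multigraph V E ends" and e: "e \<in> E" and ab: "ends e = (a, b)" and w: "w \<notin> V"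
    and e': "e' \<notin> E"
  shows "tutteZ (insert w V) (insert e' E) (ends(e := (a, w), e' := (w, b))) q v =
    (\<Sum>B\<in>Pow (E - {e}). (\<Prod>f\<in>B. v f) *
       (q ^ ncomp V B ends * (q + v e + v e') + v e * v e' * q ^ ncomp V (insert e B) ends))"
proof -
  define ends' where "ends' = ends(e := (a, w), e' := (w, b))"
  define V' where "V' = insert w V"
  have fin: "finite E" using mg unfolding multigraph_def by auto
  note d = ncomp_subdivide[OF mg e ab w e', folded V'_def ends'_def]
  have "tutteZ V' (insert e' E) ends' q v = (\<Sum>A\<in>Pow E. (\<Prod>f\<in>A. v f) *
           (q ^ ncomp V' A ends' + v e' * q ^ ncomp V' (insert e' A) ends'))"
    using tutteZ_expand_edge[of "insert e' E" e' V' ends' q v] fin e' by simp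
  also have "\<dots> = (\<Sum>B\<in>Pow (E - {e}). (\<Prod>f\<in>B. v f) *
           (q ^ ncomp V' B ends' + v e' * q ^ ncomp V' (insert e' B) ends') +
           (\<Prod>f\<in>insert e B. v f) *
           (q ^ ncomp V' (insert e B) ends' + v e' * q ^ ncomp V' (insert e' (insert e B)) ends'))"
    by (rule sum_Pow_remove[OF fin e])
  also have "\<dots> = (\<Sum>B\<in>Pow (E - {e}). (\<Prod>f\<in>B. v f) *
       (q ^ ncomp V B ends * (q + v e + v e') + v e * v e' * q ^ ncomp V (insert e B) ends))"
  proof (rule sum.cong)
    fix B assume B: "B \<in> Pow (E - {e})"
    then have "finite B" "e \<notin> B" using fin finite_subset by auto
    then show "(\<Prod>f\<in>B. v f) * (q ^ ncomp V' B ends' + v e' * q ^ ncomp V' (insert e' B) ends') +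
           (\<Prod>f\<in>insert e B. v f) *
           (q ^ ncomp V' (insert e B) ends' + v e' * q ^ ncomp V' (insert e' (insert e B)) ends') =
          (\<Prod>f\<in>B. v f) * (q ^ ncomp V B ends * (q + v e + v e') + v e * v e' * q ^ ncomp V (insert e B) ends)"
      using d[of B] B by (simp add: algebra_simps)
  qed simp
  finally show ?thesis unfolding ends'_def V'_def .
qed

lemma tutteZ_series:
  assumes mg: "multigraph V E ends" and e: "e \<in> E" and ab: "ends e = (a, b)" and w: "w \<notin> V"
    and e': "e' \<notin> E" and ne: "q + v e + v e' \<noteq> 0"
  shows "tutteZ (insert w V) (insert e' E) (ends(e := (a, w), e' := (w, b))) q v =
    (q + v e + v e') * tutteZ V E ends q (v(e := v e * v e' / (q + v e + v e')))"
proof -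
  have fin: "finite E" using mg unfolding multigraph_def by auto
  show ?thesis
    unfolding tutteZ_series_expand[OF mg e ab w e'] tutteZ_fun_upd_expand[OF fin e] sum_distrib_left
    by (rule sum.cong) (use ne in \<open>simp_all add: field_simps\<close>)
qed

lemma ncomp_insert_bridge:
  assumes mg: "multigraph V E ends" and e: "e \<in> E" and ab: "ends e = (a, b)"
    and br: "(a, b) \<notin> conn V (E - {e}) ends" and B: "B \<subseteq> E - {e}"
  shows "ncomp V B ends = Suc (ncomp V (insert e B) ends)"
proof -
  have fin: "finite V" using mg unfolding multigraph_def by auto
  have aV: "a \<in> V" and bV: "b \<in> V" using mg e ab unfolding multigraph_def by force+
  define r where "r = adj B ends"
  have sr: "sym r" unfolding r_def by (rule sym_adj)
  have "(adj B ends)\<^sup>* \<subseteq> (adj (E - {e}) ends)\<^sup>*" using B by (intro rtrancl_mono adj_mono)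
  then have nab: "(a, b) \<notin> r\<^sup>*" using br aV bV unfolding conn_def r_def by auto
  have "adj (insert e B) ends = insert (a, b) (insert (b, a) r)"
    unfolding r_def using ab by (simp add: adj_insert)
  then show ?thesis using card_quotient_join[OF fin sr aV bV nab]
    unfolding ncomp_def conn_def r_def by simp
qed

lemma tutteZ_series_bridge:
  assumes mg: "multigraph V E ends" and e: "e \<in> E" and ab: "ends e = (a, b)" and w: "w \<notin> V"
    and e': "e' \<notin> E" and br: "(a, b) \<notin> conn V (E - {e}) ends"
  shows "q * tutteZ (insert w V) (insert e' E) (ends(e := (a, w), e' := (w, b))) q v =
    (q + v e) * (q + v e') * tutteZ V E ends q (v(e := 0))"
proof -
  have fin: "finite E" using mg unfolding multigraph_def by auto
  show ?thesis
    unfolding tutteZ_series_expand[OF mg e ab w e'] tutteZ_fun_upd_expand[OF fin e] sum_distrib_left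
    by (rule sum.cong) (use ncomp_insert_bridge[OF mg e ab br] in \<open>auto simp: algebra_simps\<close>)
qed

lemma forest_remove_edge: "forest V E ends \<Longrightarrow> forest V (E - {e}) ends"
  unfolding forest_def multigraph_def
proof (intro conjI ballI; (elim conjE)?)
  fix f assume H: "\<forall>e\<in>E. (fst (ends e), snd (ends e)) \<notin> conn V (E - {e}) ends" and f: "f \<in> E - {e}"
  have "conn V (E - {e} - {f}) ends \<subseteq> conn V (E - {f}) ends"
    unfolding conn_def by (intro Int_mono rtrancl_mono adj_mono) auto
  then show "(fst (ends f), snd (ends f)) \<notin> conn V (E - {e} - {f}) ends" using H f by auto
qed auto

lemma tutteZ_forest_nonzero:
  assumes "forest V E ends" "q \<noteq> 0" "\<forall>e\<in>E. q + v e \<noteq> 0"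
  shows "tutteZ V E ends q v \<noteq> 0"
  using assms
proof (induction "card E" arbitrary: E)
  case 0
  then have "E = {}" unfolding forest_def multigraph_def by auto
  then show ?case using 0 unfolding tutteZ_def by simp
next
  case (Suc n)
  have mg: "multigraph V E ends" using Suc.prems unfolding forest_def by auto
  then have fin: "finite E" unfolding multigraph_def by auto
  obtain e where e: "e \<in> E" using Suc.hyps(2) by (metis card.empty ex_in_conv nat.simps(3))
  obtain a b where ab: "ends e = (a, b)" by (cases "ends e")
  have br: "(a, b) \<notin> conn V (E - {e}) ends" using Suc.prems(1) e ab unfolding forest_def by force
  have IH: "tutteZ V (E - {e}) ends q v \<noteq> 0"
    using Suc.hyps(1)[of "E - {e}"] Suc.hyps(2) e fin forest_remove_edge[OF Suc.prems(1)] Suc.prems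
    by auto
  define S where "S = (\<Sum>B\<in>Pow (E - {e}). (\<Prod>f\<in>B. v f) * q ^ ncomp V (insert e B) ends)"
  have "tutteZ V E ends q v = (q + v e) * S"
    unfolding tutteZ_expand_edge[OF fin e] S_def sum_distrib_left
    by (rule sum.cong) (use ncomp_insert_bridge[OF mg e ab br] in \<open>auto simp: algebra_simps\<close>)
  moreover have "tutteZ V (E - {e}) ends q v = q * S"
    unfolding tutteZ_def S_def sum_distrib_left
    by (rule sum.cong) (use ncomp_insert_bridge[OF mg e ab br] in \<open>auto simp: algebra_simps\<close>)
  ultimately show ?case using IH Suc.prems e by auto
qed


section \<open>Bounded flows and bridges\<close>

definition nonbridge :: "'v set \<Rightarrow> 'e set \<Rightarrow> ('e \<Rightarrow> 'v \<times> 'v) \<Rightarrow> 'e \<Rightarrow> bool" where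
  "nonbridge V E ends e \<longleftrightarrow> (fst (ends e), snd (ends e)) \<in> conn V (E - {e}) ends"

text \<open>edge_copies E k has k e parallel copies of each edge e; flow_bounded L bounds its
  maxmaxflow by L, with pairwise disjoint connecting edge sets in place of edge-disjoint paths.\<close>

definition edge_copies :: "'e set \<Rightarrow> ('e \<Rightarrow> nat) \<Rightarrow> ('e \<times> nat) set" where
  "edge_copies E k = {(e, i). e \<in> E \<and> i < k e}"

definition disjoint_connectors ::
    "'f set \<Rightarrow> ('f \<Rightarrow> 'v \<times> 'v) \<Rightarrow> 'v \<Rightarrow> 'v \<Rightarrow> nat \<Rightarrow> bool" where
  "disjoint_connectors E ends x y n \<longleftrightarrow>
    (\<exists>S. (\<forall>i<n. S i \<subseteq> E \<and> (x, y) \<in> (adj (S i) ends)\<^sup>*) \<and>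
      (\<forall>i<n. \<forall>j<n. i \<noteq> j \<longrightarrow> S i \<inter> S j = {}))"

definition flow_bounded ::
    "nat \<Rightarrow> 'v set \<Rightarrow> 'e set \<Rightarrow> ('e \<Rightarrow> 'v \<times> 'v) \<Rightarrow> ('e \<Rightarrow> nat) \<Rightarrow> bool" where
  "flow_bounded L V E ends k \<longleftrightarrow> (\<forall>x\<in>V. \<forall>y\<in>V. x \<noteq> y \<longrightarrow>
    \<not> disjoint_connectors (edge_copies E k) (ends \<circ> fst) x y (Suc L))"

lemma disjoint_connectors_transfer:
  assumes F: "disjoint_connectors E1 ends1 x y n"
    and sub: "\<And>f. f \<in> E1 \<Longrightarrow> g f \<subseteq> E2"
    and con: "\<And>f. f \<in> E1 \<Longrightarrow> ends1 f \<in> (adj (g f) ends2)\<^sup>*"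
    and dis: "\<And>f1 f2. f1 \<in> E1 \<Longrightarrow> f2 \<in> E1 \<Longrightarrow> f1 \<noteq> f2 \<Longrightarrow> g f1 \<inter> g f2 = {}"
  shows "disjoint_connectors E2 ends2 x y n"
proof -
  obtain S where S: "\<forall>i<n. S i \<subseteq> E1 \<and> (x, y) \<in> (adj (S i) ends1)\<^sup>*"
    "\<forall>i<n. \<forall>j<n. i \<noteq> j \<longrightarrow> S i \<inter> S j = {}" using F unfolding disjoint_connectors_def by blast
  define S' where "S' i = \<Union>(g ` S i)" for i
  show ?thesis unfolding disjoint_connectors_def
  proof (intro exI[of _ S'] conjI allI impI)
    fix i assume i: "i < n"
    show "S' i \<subseteq> E2" using S i sub unfolding S'_def by blast
    have "adj (S i) ends1 \<subseteq> (adj (S' i) ends2)\<^sup>*"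
    proof (rule subrelI)
      fix u w assume "(u, w) \<in> adj (S i) ends1"
      then obtain f where f: "f \<in> S i" "ends1 f = (u, w) \<or> ends1 f = (w, u)" unfolding adj_def by auto
      have "adj (g f) ends2 \<subseteq> adj (S' i) ends2" using f unfolding S'_def by (intro adj_mono) auto
      then have "ends1 f \<in> (adj (S' i) ends2)\<^sup>*" using con[of f] f S i by (meson rtrancl_mono subsetD)
      then show "(u, w) \<in> (adj (S' i) ends2)\<^sup>*" using f(2) sym_rtranclD[OF sym_adj] by auto
    qed
    then show "(x, y) \<in> (adj (S' i) ends2)\<^sup>*" using S i by (meson rtrancl_subset_rtrancl subsetD)
  next
    fix i j assume "i < n" "j < n" "i \<noteq> j"
    then have "S i \<inter> S j = {}" using S by auto
    then show "S' i \<inter> S' j = {}" unfolding S'_def using dis S \<open>i < n\<close> \<open>j < n\<close> by blast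
  qed
qed

lemma flow_bounded_nonbridge_lt:
  assumes mg: "multigraph V E ends" and ll: "loopless E ends" and fl: "flow_bounded L V E ends k"
    and k1: "\<forall>f\<in>E. 1 \<le> k f" and e: "e \<in> E"
    and nb: "nonbridge V E ends e"
  shows "k e < L"
proof (rule ccontr)
  \<comment> \<open>otherwise L copies of e and the rest of the graph, which still joins the ends of e,
    would be L + 1 disjoint connectors\<close>
  assume "\<not> k e < L"
  then have kL: "L \<le> k e" by simp
  define a where "a = fst (ends e)"
  define b where "b = snd (ends e)"
  have ab: "ends e = (a, b)" unfolding a_def b_def by simp
  have aV: "a \<in> V" and bV: "b \<in> V" and anb: "a \<noteq> b"
    using mg ll e unfolding multigraph_def loopless_def a_def b_def by auto
  define S where "S i = (if i < L then {(e, i)} else edge_copies (E - {e}) k)" for i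
  have "disjoint_connectors (edge_copies E k) (ends \<circ> fst) a b (Suc L)" unfolding disjoint_connectors_def
  proof (intro exI[of _ S] conjI allI impI)
    fix i assume i: "i < Suc L"
    show "S i \<subseteq> edge_copies E k" unfolding S_def edge_copies_def using kL e by auto
    show "(a, b) \<in> (adj (S i) (ends \<circ> fst))\<^sup>*"
    proof (cases "i < L")
      case True
      then have "(a, b) \<in> adj (S i) (ends \<circ> fst)" unfolding S_def adj_def using ab by auto
      then show ?thesis by auto
    next
      case False
      have "adj (E - {e}) ends \<subseteq> adj (S i) (ends \<circ> fst)"
      proof (rule subrelI)
        fix u w assume "(u, w) \<in> adj (E - {e}) ends"
        then obtain f where f: "f \<in> E - {e}" "ends f = (u, w) \<or> ends f = (w, u)" unfolding adj_def by auto
        then have "(f, 0) \<in> S i" unfolding S_def edge_copies_def using False k1 by force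
        then show "(u, w) \<in> adj (S i) (ends \<circ> fst)" using f unfolding adj_def by force
      qed
      then have "(adj (E - {e}) ends)\<^sup>* \<subseteq> (adj (S i) (ends \<circ> fst))\<^sup>*" by (rule rtrancl_mono)
      then show ?thesis using nb unfolding nonbridge_def conn_def a_def b_def by auto
    qed
  next
    fix i j assume "i < Suc L" "j < Suc L" "i \<noteq> j"
    then show "S i \<inter> S j = {}" unfolding S_def edge_copies_def by auto
  qed
  then show False using fl aV bV anb unfolding flow_bounded_def by auto
qed

lemma edges_of_rtrancl_path:
  assumes "rtrancl_path R x xs y" and R: "R = (\<lambda>a b. (a, b) \<in> adj S ends)"
    and x: "x \<in> V" and S: "S \<subseteq> E" and mg: "multigraph V E ends"
  shows "\<exists>es. length es = length xs \<and> set es \<subseteq> S \<and>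
     (\<forall>i<length es. ends (es ! i) = ((x # xs) ! i, (x # xs) ! Suc i) \<or> ends (es ! i) = ((x # xs) ! Suc i, (x # xs) ! i)) \<and>
     set (x # xs) \<subseteq> V \<and> last (x # xs) = y"
  using assms(1) x
proof (induction rule: rtrancl_path.induct)
  case (base x) then show ?case by auto
next
  case (step x z ys y)
  have "(x, z) \<in> adj S ends" using step.hyps(1) R by simp
  then obtain f where f: "f \<in> S" "ends f = (x, z) \<or> ends f = (z, x)" unfolding adj_def by auto
  have zV: "z \<in> V" using \<open>(x, z) \<in> adj S ends\<close> adj_subset[OF mg S] by auto
  obtain es where es: "length es = length ys" "set es \<subseteq> S"
    "\<forall>i<length es. ends (es ! i) = ((z # ys) ! i, (z # ys) ! Suc i) \<or> ends (es ! i) = ((z # ys) ! Suc i, (z # ys) ! i)"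
    "set (z # ys) \<subseteq> V" "last (z # ys) = y" using step.IH zV by blast
  show ?case
  proof (intro exI[of _ "f # es"] conjI)
    show "\<forall>i<length (f # es). ends ((f # es) ! i) = ((x # z # ys) ! i, (x # z # ys) ! Suc i) \<or>
        ends ((f # es) ! i) = ((x # z # ys) ! Suc i, (x # z # ys) ! i)"
    proof (intro allI impI)
      fix i assume "i < length (f # es)"
      then show "ends ((f # es) ! i) = ((x # z # ys) ! i, (x # z # ys) ! Suc i) \<or>
        ends ((f # es) ! i) = ((x # z # ys) ! Suc i, (x # z # ys) ! i)"
        using f es(3) by (cases i) auto
    qed
  qed (use es f step.prems in auto)
qed

lemma is_path_of_rtrancl:
  assumes mg: "multigraph V E ends" and S: "S \<subseteq> E" and x: "x \<in> V" and xy: "x \<noteq> y"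
    and c: "(x, y) \<in> (adj S ends)\<^sup>*"
  shows "\<exists>es. is_path V E ends x y es \<and> set es \<subseteq> S"
proof -
  have "(\<lambda>a b. (a, b) \<in> adj S ends)\<^sup>*\<^sup>* x y" using c by (simp add: rtranclp_rtrancl_eq)
  then obtain xs where "rtrancl_path (\<lambda>a b. (a, b) \<in> adj S ends) x xs y"
    by (auto simp: rtranclp_eq_rtrancl_path)
  then obtain xs' where p: "rtrancl_path (\<lambda>a b. (a, b) \<in> adj S ends) x xs' y" and d: "distinct (x # xs')"
    by (rule rtrancl_path_distinct)
  obtain es where es: "length es = length xs'" "set es \<subseteq> S"
     "\<forall>i<length es. ends (es ! i) = ((x # xs') ! i, (x # xs') ! Suc i) \<or> ends (es ! i) = ((x # xs') ! Suc i, (x # xs') ! i)"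
     "set (x # xs') \<subseteq> V" "last (x # xs') = y"
    using edges_of_rtrancl_path[OF p refl x S mg] by blast
  have "(x # xs') ! length es = y" using es(1) es(5) last_conv_nth[of "x # xs'"] by simp
  moreover have "es ! i \<in> E" if "i < length es" for i using that es(2) S by (meson nth_mem subsetD)
  ultimately have "is_path V E ends x y es"
    unfolding is_path_def using es d by (intro exI[of _ "x # xs'"]) auto
  then show ?thesis using es by blast
qed

lemma is_path_nonempty: "is_path V E ends x y es \<Longrightarrow> x \<noteq> y \<Longrightarrow> es \<noteq> []"
  unfolding is_path_def by auto

lemma is_path_subset: "is_path V E ends x y es \<Longrightarrow> set es \<subseteq> E"
  unfolding is_path_def by (auto simp: in_set_conv_nth)

lemma disjoint_paths_le_card:
  assumes xy: "x \<noteq> y" and fin: "finite E" and len: "length P = k"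
    and paths: "\<forall>p\<in>set P. is_path V E ends x y p"
    and dis: "\<forall>i<k. \<forall>j<k. i \<noteq> j \<longrightarrow> set (P ! i) \<inter> set (P ! j) = {}"
  shows "k \<le> card E"
proof -
  have pi: "is_path V E ends x y (P ! i)" if "i < k" for i using paths len that by auto
  have "card (\<Union>i\<in>{..<k}. set (P ! i)) = (\<Sum>i\<in>{..<k}. card (set (P ! i)))"
    using dis by (intro card_UN_disjoint) auto
  also have "\<dots> \<ge> (\<Sum>i\<in>{..<k}. 1)"
    using is_path_nonempty[OF pi xy] by (intro sum_mono) (auto simp: Suc_le_eq card_gt_0_iff)
  moreover have "card (\<Union>i\<in>{..<k}. set (P ! i)) \<le> card E"
    using is_path_subset[OF pi] fin by (intro card_mono) auto
  ultimately show ?thesis by simp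
qed

lemma local_edge_conn_ge:
  assumes mg: "multigraph V E ends" and x: "x \<in> V" and xy: "x \<noteq> y"
    and T: "\<And>i. i < n \<Longrightarrow> T i \<subseteq> E \<and> (x, y) \<in> (adj (T i) ends)\<^sup>*"
    and dis: "\<And>i j. i < n \<Longrightarrow> j < n \<Longrightarrow> i \<noteq> j \<Longrightarrow> T i \<inter> T j = {}"
  shows "n \<le> local_edge_conn V E ends x y"
proof -
  have fin: "finite E" using mg unfolding multigraph_def by auto
  have "\<exists>es. is_path V E ends x y es \<and> set es \<subseteq> T i" if "i < n" for i
    using is_path_of_rtrancl[OF mg _ x xy] T[OF that] by blast
  then have "\<forall>i\<in>{..<n}. \<exists>es. is_path V E ends x y es \<and> set es \<subseteq> T i" by blast
  then obtain p where p: "\<forall>i\<in>{..<n}. is_path V E ends x y (p i) \<and> set (p i) \<subseteq> T i"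
    by metis
  define P where "P = map p [0..<n]"
  define K where "K = {k. \<exists>P. length P = k \<and> (\<forall>p\<in>set P. is_path V E ends x y p) \<and>
      (\<forall>i<k. \<forall>j<k. i \<noteq> j \<longrightarrow> set (P ! i) \<inter> set (P ! j) = {})}"
  have "n \<in> K" unfolding K_def
  proof (intro CollectI exI[of _ P] conjI allI impI)
    show "length P = n" "\<forall>p\<in>set P. is_path V E ends x y p" unfolding P_def using p by auto
    fix i j assume ij: "i < n" "j < n" "i \<noteq> j"
    then have "set (p i) \<subseteq> T i" "set (p j) \<subseteq> T j" using p by auto
    then show "set (P ! i) \<inter> set (P ! j) = {}" unfolding P_def using dis[OF ij] ij by auto
  qed
  moreover have "K \<subseteq> {..card E}" unfolding K_def using disjoint_paths_le_card[OF xy fin] by auto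
  then have "finite K" using finite_subset by blast
  ultimately show ?thesis unfolding local_edge_conn_def K_def[symmetric] by (simp add: Max_ge)
qed

lemma local_edge_conn_le_maxmaxflow:
  assumes fin: "finite V" and xy: "x \<in> V" "y \<in> V" "x \<noteq> y"
  shows "local_edge_conn V E ends x y \<le> maxmaxflow V E ends"
proof -
  have "card {x, y} \<le> card V" using xy fin by (intro card_mono) auto
  then have "\<not> card V < 2" using xy by simp
  moreover have "{local_edge_conn V E ends x y |x y. x \<in> V \<and> y \<in> V \<and> x \<noteq> y}
      \<subseteq> (\<lambda>(x, y). local_edge_conn V E ends x y) ` (V \<times> V)"
    by auto
  then have "finite {local_edge_conn V E ends x y |x y. x \<in> V \<and> y \<in> V \<and> x \<noteq> y}"
    using fin by (meson finite_SigmaI finite_imageI finite_subset)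
  ultimately show ?thesis unfolding maxmaxflow_def using xy by (auto intro!: Max_ge)
qed

lemma flow_bounded_maxmaxflow:
  assumes mg: "multigraph V E ends" and mm: "maxmaxflow V E ends \<le> L"
  shows "flow_bounded L V E ends (\<lambda>_. 1)"
  unfolding flow_bounded_def
proof (intro ballI impI notI)
  fix x y assume x: "x \<in> V" and y: "y \<in> V" and xy: "x \<noteq> y"
  assume "disjoint_connectors (edge_copies E (\<lambda>_. 1)) (ends \<circ> fst) x y (Suc L)"
  then obtain S where
    S: "\<forall>i<Suc L. S i \<subseteq> edge_copies E (\<lambda>_. 1) \<and> (x, y) \<in> (adj (S i) (ends \<circ> fst))\<^sup>*"
    "\<forall>i<Suc L. \<forall>j<Suc L. i \<noteq> j \<longrightarrow> S i \<inter> S j = {}" unfolding disjoint_connectors_def by blast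
  have copies: "S i \<subseteq> E \<times> {0}" if "i < Suc L" for i using S that unfolding edge_copies_def by auto
  have adj_fst: "adj (S i) (ends \<circ> fst) = adj (fst ` S i) ends" for i unfolding adj_def by force
  have "fst ` S i \<subseteq> E \<and> (x, y) \<in> (adj (fst ` S i) ends)\<^sup>*" if "i < Suc L" for i
  proof
    show "fst ` S i \<subseteq> E" using copies[OF that] by auto
    show "(x, y) \<in> (adj (fst ` S i) ends)\<^sup>*" using S that unfolding adj_fst by blast
  qed
  moreover have "fst ` S i \<inter> fst ` S j = {}" if "i < Suc L" "j < Suc L" "i \<noteq> j" for i j
  proof -
    have "inj_on fst (E \<times> {0::nat})" by (rule inj_onI) auto
    then have "fst ` (S i \<inter> S j) = fst ` S i \<inter> fst ` S j"
      using inj_on_image_Int copies[OF that(1)] copies[OF that(2)] by blast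
    moreover have "S i \<inter> S j = {}" using S that by blast
    ultimately show ?thesis by simp
  qed
  ultimately have "Suc L \<le> local_edge_conn V E ends x y" by (rule local_edge_conn_ge[OF mg x xy])
  moreover have "finite V" using mg unfolding multigraph_def by auto
  then have "local_edge_conn V E ends x y \<le> maxmaxflow V E ends"
    by (rule local_edge_conn_le_maxmaxflow[OF _ x y xy])
  ultimately show False using mm by simp
qed

lemma flow_bounded_series:
  assumes fl: "flow_bounded L (insert w V) (insert e' E) (ends(e := (a, w), e' := (w, b))) k"
    and e: "e \<in> E" and e': "e' \<notin> E" and ab: "ends e = (a, b)" and k1: "1 \<le> k e" "1 \<le> k e'"
  shows "flow_bounded L V E ends (k(e := 1))"
  unfolding flow_bounded_def
proof (intro ballI impI notI)
  define ends' where "ends' = ends(e := (a, w), e' := (w, b))"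
  have ee: "e \<noteq> e'" using e e' by auto
  fix x y assume x: "x \<in> V" and y: "y \<in> V" and xy: "x \<noteq> y"
  assume F: "disjoint_connectors (edge_copies E (k(e := 1))) (ends \<circ> fst) x y (Suc L)"
  define g where "g p = (if fst p = e then {(e, 0), (e', 0)} else {p})" for p :: "'b \<times> nat"
  have "disjoint_connectors (edge_copies (insert e' E) k) (ends' \<circ> fst) x y (Suc L)"
  proof (rule disjoint_connectors_transfer[OF F, of g])
    fix p assume p: "p \<in> edge_copies E (k(e := 1))"
    show "g p \<subseteq> edge_copies (insert e' E) k" using p k1 unfolding g_def edge_copies_def by (auto split: if_splits)
    show "(ends \<circ> fst) p \<in> (adj (g p) (ends' \<circ> fst))\<^sup>*"
    proof (cases "fst p = e")
      case True
      have "(a, w) \<in> adj (g p) (ends' \<circ> fst)"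
        using ends_in_adj[of "(e, 0)" "g p" "ends' \<circ> fst"] True ee unfolding g_def ends'_def by simp
      moreover have "(w, b) \<in> adj (g p) (ends' \<circ> fst)"
        using ends_in_adj[of "(e', 0)" "g p" "ends' \<circ> fst"] True ee unfolding g_def ends'_def by simp
      ultimately have "(a, b) \<in> (adj (g p) (ends' \<circ> fst))\<^sup>*" by (meson r_into_rtrancl rtrancl_trans)
      then show ?thesis using True ab by simp
    next
      case False
      have "fst p \<in> E" using p unfolding edge_copies_def by auto
      then have "fst p \<noteq> e'" using e' by auto
      then have "ends' (fst p) = ends (fst p)" unfolding ends'_def using False by simp
      then have "(ends \<circ> fst) p \<in> adj (g p) (ends' \<circ> fst)"
        using ends_in_adj[of p "g p" "ends' \<circ> fst"] False unfolding g_def by simp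
      then show ?thesis by auto
    qed
  next
    fix p1 p2 assume p1: "p1 \<in> edge_copies E (k(e := 1))" and p2: "p2 \<in> edge_copies E (k(e := 1))" and ne: "p1 \<noteq> p2"
    have f1: "fst p1 \<in> E" "fst p1 = e \<longrightarrow> snd p1 = 0" using p1 unfolding edge_copies_def by auto
    have f2: "fst p2 \<in> E" "fst p2 = e \<longrightarrow> snd p2 = 0" using p2 unfolding edge_copies_def by auto
    show "g p1 \<inter> g p2 = {}"
      using f1 f2 ne e' unfolding g_def by (cases p1, cases p2) auto
  qed
  then show False using fl x y xy unfolding flow_bounded_def ends'_def by auto
qed

lemma flow_bounded_parallel:
  assumes fl: "flow_bounded L V (insert e' E) (ends(e' := ends e)) k"
    and e: "e \<in> E" and e': "e' \<notin> E"
  shows "flow_bounded L V E ends (k(e := k e + k e'))"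
  unfolding flow_bounded_def
proof (intro ballI impI notI)
  define ends' where "ends' = ends(e' := ends e)"
  have ee: "e \<noteq> e'" using e e' by auto
  fix x y assume x: "x \<in> V" and y: "y \<in> V" and xy: "x \<noteq> y"
  assume F: "disjoint_connectors (edge_copies E (k(e := k e + k e'))) (ends \<circ> fst) x y (Suc L)"
  define g where "g p = (if fst p = e \<and> k e \<le> snd p then {(e', snd p - k e)} else {p})" for p :: "'b \<times> nat"
  have "disjoint_connectors (edge_copies (insert e' E) k) (ends' \<circ> fst) x y (Suc L)"
  proof (rule disjoint_connectors_transfer[OF F, of g])
    fix p assume p: "p \<in> edge_copies E (k(e := k e + k e'))"
    show "g p \<subseteq> edge_copies (insert e' E) k" using p unfolding g_def edge_copies_def by (auto split: if_splits)
    have "fst p \<in> E" using p unfolding edge_copies_def by auto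
    then have "fst p \<noteq> e'" using e' by auto
    then have ep: "ends' (fst p) = ends (fst p)" unfolding ends'_def by simp
    show "(ends \<circ> fst) p \<in> (adj (g p) (ends' \<circ> fst))\<^sup>*"
    proof (cases "fst p = e \<and> k e \<le> snd p")
      case True
      have "(ends' \<circ> fst) (e', snd p - k e) \<in> adj (g p) (ends' \<circ> fst)"
        using ends_in_adj[of "(e', snd p - k e)" "g p" "ends' \<circ> fst"] True unfolding g_def by simp
      then show ?thesis using True unfolding ends'_def by auto
    next
      case False
      have gp: "g p = {p}" unfolding g_def by (rule if_not_P[OF False])
      have "(ends' \<circ> fst) p \<in> adj (g p) (ends' \<circ> fst)"
        unfolding gp by (rule ends_in_adj) simp
      then show ?thesis using ep by auto
    qed
  next
    fix p1 p2 assume p1: "p1 \<in> edge_copies E (k(e := k e + k e'))"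
      and p2: "p2 \<in> edge_copies E (k(e := k e + k e'))" and ne: "p1 \<noteq> p2"
    have f1: "fst p1 \<in> E" using p1 unfolding edge_copies_def by auto
    have f2: "fst p2 \<in> E" using p2 unfolding edge_copies_def by auto
    show "g p1 \<inter> g p2 = {}"
    proof (cases p1, cases p2)
      fix a1 i1 a2 i2 assume P: "p1 = (a1, i1)" "p2 = (a2, i2)"
      show ?thesis using P ne f1 f2 e' unfolding g_def by auto
    qed
  qed
  then show False using fl x y xy unfolding flow_bounded_def ends'_def by auto
qed

lemma adj_subset_rtrancl_subdivide:
  assumes e: "e \<in> E" and e': "e' \<notin> E" and ab: "ends e = (a, b)" and F: "F \<subseteq> E"
  shows "adj F ends \<subseteq> (adj (insert e' F) (ends(e := (a, w), e' := (w, b))))\<^sup>*"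
proof (rule subrelI)
  define ends' where "ends' = ends(e := (a, w), e' := (w, b))"
  have ee: "e \<noteq> e'" using e e' by auto
  fix u x assume "(u, x) \<in> adj F ends"
  then obtain f where f: "f \<in> F" "ends f = (u, x) \<or> ends f = (x, u)" unfolding adj_def by auto
  have fe': "f \<noteq> e'" using f F e' by auto
  show "(u, x) \<in> (adj (insert e' F) ends')\<^sup>*"
  proof (cases "f = e")
    case True
    have 1: "(a, w) \<in> adj (insert e' F) ends'" "(w, a) \<in> adj (insert e' F) ends'"
      using ends_in_adj[of e "insert e' F" ends'] ends_in_adj_swap[of e "insert e' F" ends'] True f ee
      unfolding ends'_def by auto
    have 2: "(w, b) \<in> adj (insert e' F) ends'" "(b, w) \<in> adj (insert e' F) ends'"
      using ends_in_adj[of e' "insert e' F" ends'] ends_in_adj_swap[of e' "insert e' F" ends'] ee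
      unfolding ends'_def by auto
    have "(a, b) \<in> (adj (insert e' F) ends')\<^sup>*" "(b, a) \<in> (adj (insert e' F) ends')\<^sup>*"
      using 1 2 by (meson r_into_rtrancl rtrancl_trans)+
    then show ?thesis using f True ab by auto
  next
    case False
    have "ends' f = ends f" unfolding ends'_def using False fe' by simp
    then have "(u, x) \<in> adj (insert e' F) ends'" using f unfolding adj_def by force
    then show ?thesis by auto
  qed
qed


lemma forest_loopless: assumes "forest V E ends" shows "loopless E ends"
  unfolding loopless_def
proof
  fix e assume e: "e \<in> E"
  show "fst (ends e) \<noteq> snd (ends e)"
  proof
    assume h: "fst (ends e) = snd (ends e)"
    have "fst (ends e) \<in> V" using assms e unfolding forest_def multigraph_def by auto
    then have "(fst (ends e), snd (ends e)) \<in> conn V (E - {e}) ends" unfolding conn_def using h by simp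
    then show False using assms e unfolding forest_def by auto
  qed
qed

lemma series_parallel_multigraph_loopless: "series_parallel V E ends \<Longrightarrow> multigraph V E ends \<and> loopless E ends"
proof (induction rule: series_parallel.induct)
  case (sp_forest V E ends)
  then show ?case using forest_loopless unfolding forest_def by auto
next
  case (sp_series V E ends e a b w e')
  have ee: "e \<noteq> e'" using sp_series.hyps by auto
  have ab: "a \<in> V" "b \<in> V" "a \<noteq> b" using sp_series unfolding multigraph_def loopless_def by force+
  show ?case using sp_series ee ab unfolding multigraph_def loopless_def by auto
next
  case (sp_parallel V E ends e e')
  then show ?case unfolding multigraph_def loopless_def by auto
qed
lemma nonbridge_subdivide_other:
  assumes e: "e \<in> E" and e': "e' \<notin> E" and ab: "ends e = (a, b)"
    and f: "f \<in> E" "f \<noteq> e" and nb: "nonbridge V E ends f"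
  shows "nonbridge (insert w V) (insert e' E) (ends(e := (a, w), e' := (w, b))) f"
proof -
  define ends' where "ends' = ends(e := (a, w), e' := (w, b))"
  have fe': "f \<noteq> e'" using f e' by auto
  have "adj (E - {f}) ends \<subseteq> (adj (insert e' (E - {f})) ends')\<^sup>*"
    unfolding ends'_def by (rule adj_subset_rtrancl_subdivide[where ends = ends and E = E, OF e e' ab]) auto
  moreover have "insert e' (E - {f}) = insert e' E - {f}" using fe' by auto
  ultimately have "(adj (E - {f}) ends)\<^sup>* \<subseteq> (adj (insert e' E - {f}) ends')\<^sup>*"
    by (simp add: rtrancl_subset_rtrancl)
  moreover have "ends' f = ends f" unfolding ends'_def using f fe' by simp
  ultimately show ?thesis using nb unfolding nonbridge_def conn_def ends'_def[symmetric] by auto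
qed

lemma nonbridge_subdivide_new:
  fixes w :: 'v
  assumes e: "e \<in> E" and e': "e' \<notin> E" and ab: "ends e = (a, b)" and nb: "nonbridge V E ends e"
  defines "ends' \<equiv> ends(e := (a, w), e' := (w, b))"
  shows "nonbridge (insert w V) (insert e' E) ends' e" and "nonbridge (insert w V) (insert e' E) ends' e'"
proof -
  have ee: "e \<noteq> e'" using e e' by auto
  have e'e: "ends' e = (a, w)" and e'e': "ends' e' = (w, b)" unfolding ends'_def using ee by auto
  have ab1: "(a, b) \<in> (adj (E - {e}) ends)\<^sup>*" and abV: "a \<in> V" "b \<in> V"
    using nb ab unfolding nonbridge_def conn_def by auto
  have "adj (E - {e}) ends = adj (E - {e}) ends'" unfolding ends'_def using e' by (intro adj_cong) auto
  moreover have "adj (E - {e}) ends' \<subseteq> adj (insert e' E - {e}) ends'"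
    and "adj (E - {e}) ends' \<subseteq> adj (insert e' E - {e'}) ends'"
    using e' by (intro adj_mono; auto)+
  ultimately have "(a, b) \<in> (adj (insert e' E - {e}) ends')\<^sup>*" "(a, b) \<in> (adj (insert e' E - {e'}) ends')\<^sup>*"
    using ab1 by (metis rtrancl_mono subsetD)+
  moreover have "(b, w) \<in> adj (insert e' E - {e}) ends'"
    using ends_in_adj_swap[of e' "insert e' E - {e}" ends'] e'e' ee by auto
  moreover have "(w, a) \<in> adj (insert e' E - {e'}) ends'"
    using ends_in_adj_swap[of e "insert e' E - {e'}" ends'] e'e ee e by auto
  ultimately have "(a, w) \<in> (adj (insert e' E - {e}) ends')\<^sup>*" "(w, b) \<in> (adj (insert e' E - {e'}) ends')\<^sup>*"
    by (meson rtrancl_into_rtrancl converse_rtrancl_into_rtrancl)+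
  then show "nonbridge (insert w V) (insert e' E) ends' e" "nonbridge (insert w V) (insert e' E) ends' e'"
    unfolding nonbridge_def conn_def using e'e e'e' abV by auto
qed

lemma nonbridge_parallel_other:
  assumes e': "e' \<notin> E" and f: "f \<in> E" and nb: "nonbridge V E ends f"
  shows "nonbridge V (insert e' E) (ends(e' := ends e)) f"
proof -
  define ends' where "ends' = ends(e' := ends e)"
  have fe': "f \<noteq> e'" using f e' by auto
  have "adj (E - {f}) ends = adj (E - {f}) ends'" unfolding ends'_def using e' by (intro adj_cong) auto
  also have "\<dots> \<subseteq> adj (insert e' E - {f}) ends'" by (intro adj_mono) auto
  finally have "(adj (E - {f}) ends)\<^sup>* \<subseteq> (adj (insert e' E - {f}) ends')\<^sup>*" by (rule rtrancl_mono)
  moreover have "ends' f = ends f" unfolding ends'_def using fe' by simp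
  ultimately show ?thesis using nb unfolding nonbridge_def conn_def ends'_def[symmetric] by auto
qed

lemma nonbridge_parallel_new:
  assumes mg: "multigraph V E ends" and e: "e \<in> E" and e': "e' \<notin> E"
  defines "ends' \<equiv> ends(e' := ends e)"
  shows "nonbridge V (insert e' E) ends' e" and "nonbridge V (insert e' E) ends' e'"
proof -
  have ee: "e \<noteq> e'" using e e' by auto
  have abV: "fst (ends e) \<in> V" "snd (ends e) \<in> V" using mg e unfolding multigraph_def by auto
  have e'e: "ends' e = ends e" and e'e': "ends' e' = ends e" unfolding ends'_def using ee by auto
  have "ends e \<in> adj (insert e' E - {e}) ends'"
    using ends_in_adj[of e' "insert e' E - {e}" ends'] e'e' ee by auto
  then show "nonbridge V (insert e' E) ends' e"
    unfolding nonbridge_def conn_def using e'e abV by (auto simp: mem_Times_iff)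
  have "ends e \<in> adj (insert e' E - {e'}) ends'"
    using ends_in_adj[of e "insert e' E - {e'}" ends'] e'e ee e by auto
  then show "nonbridge V (insert e' E) ends' e'"
    unfolding nonbridge_def conn_def using e'e' abV by (auto simp: mem_Times_iff)
qed


section \<open>Transmissivity discs\<close>

text \<open>For y = 1 + v, (y - 1) / (y + (q - 1)) = v / (q + v) is the transmissivity of an edge of
  weight v.\<close>

definition transm_le :: "complex \<Rightarrow> real \<Rightarrow> complex \<Rightarrow> bool" where
  "transm_le q \<beta> y \<longleftrightarrow> y + (q - 1) \<noteq> 0 \<and> cmod ((y - 1) / (y + (q - 1))) \<le> \<beta>"

text \<open>Parallel edges with transmissivity radii \<beta>1, \<beta>2 combine to the radius
  (\<beta>1 + \<beta>2 + (R + 1) \<beta>1 \<beta>2) / (1 - R \<beta>1 \<beta>2), R = |q - 1| (transm_le_mult);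
  writing \<beta> = level_radius R Y turns this law into multiplication of the levels Y.\<close>

definition level_radius :: "real \<Rightarrow> real \<Rightarrow> real" where
  "level_radius R Y = (Y - 1) / (R - Y)"

lemma transm_le_iff: "transm_le q \<beta> (1 + v) \<longleftrightarrow> q + v \<noteq> 0 \<and> cmod (v / (q + v)) \<le> \<beta>"
  unfolding transm_le_def by (simp add: algebra_simps)

lemma transm_le_mono: "transm_le q \<beta> y \<Longrightarrow> \<beta> \<le> \<beta>' \<Longrightarrow> transm_le q \<beta>' y"
  unfolding transm_le_def by auto

lemma transm_le_one: "q \<noteq> 0 \<Longrightarrow> 0 \<le> \<beta> \<Longrightarrow> transm_le q \<beta> 1"
  unfolding transm_le_def by simp

lemma transm_mult_eq:
  fixes y1 y2 Q :: complex
  assumes n1: "y1 + Q \<noteq> 0" and n2: "y2 + Q \<noteq> 0"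
  defines "w1 \<equiv> (y1 - 1) / (y1 + Q)" and "w2 \<equiv> (y2 - 1) / (y2 + Q)"
  assumes w: "w1 \<noteq> 1" "w2 \<noteq> 1" and D: "1 + Q * w1 * w2 \<noteq> 0" and Q: "Q + 1 \<noteq> 0"
  shows "y1 * y2 + Q \<noteq> 0"
    and "(y1 * y2 - 1) / (y1 * y2 + Q) = (w1 + w2 + (Q - 1) * w1 * w2) / (1 + Q * w1 * w2)"
proof -
  have P1: "y1 * (1 - w1) = 1 + Q * w1" and P2: "y2 * (1 - w2) = 1 + Q * w2"
    unfolding w1_def w2_def using n1 n2 by (simp_all add: field_simps)
  define M where "M = (1 - w1) * (1 - w2)"
  have M0: "M \<noteq> 0" unfolding M_def using w by simp
  have "(y1 * y2 + Q) * M = (y1 * (1 - w1)) * (y2 * (1 - w2)) + Q * M"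
    and "(y1 * y2 - 1) * M = (y1 * (1 - w1)) * (y2 * (1 - w2)) - M"
    unfolding M_def by (simp_all add: algebra_simps)
  then have e1: "(y1 * y2 + Q) * M = (Q + 1) * (1 + Q * w1 * w2)"
    and e2: "(y1 * y2 - 1) * M = (Q + 1) * (w1 + w2 + (Q - 1) * w1 * w2)"
    unfolding P1 P2 M_def by (simp_all add: algebra_simps)
  show nz: "y1 * y2 + Q \<noteq> 0" using e1 Q D M0 by auto
  have "(y1 * y2 - 1) / (y1 * y2 + Q) = ((y1 * y2 - 1) * M) / ((y1 * y2 + Q) * M)" using M0 by simp
  then show "(y1 * y2 - 1) / (y1 * y2 + Q) = (w1 + w2 + (Q - 1) * w1 * w2) / (1 + Q * w1 * w2)"
    unfolding e1 e2 using Q by simp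
qed

lemma transm_le_mult:
  assumes A1: "transm_le q \<beta>1 y1" and A2: "transm_le q \<beta>2 y2"
    and b1: "0 \<le> \<beta>1" "\<beta>1 < 1" and b2: "0 \<le> \<beta>2" "\<beta>2 < 1"
    and R: "cmod (q - 1) * \<beta>1 * \<beta>2 < 1" and q0: "q \<noteq> 0"
  shows "transm_le q ((\<beta>1 + \<beta>2 + (cmod (q - 1) + 1) * \<beta>1 * \<beta>2) / (1 - cmod (q - 1) * \<beta>1 * \<beta>2))
    (y1 * y2)"
proof -
  define Q where "Q = q - 1"
  define w1 where "w1 = (y1 - 1) / (y1 + Q)"
  define w2 where "w2 = (y2 - 1) / (y2 + Q)"
  have n1: "y1 + Q \<noteq> 0" and n2: "y2 + Q \<noteq> 0" using A1 A2 unfolding transm_le_def Q_def by auto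
  have w1b: "cmod w1 \<le> \<beta>1" and w2b: "cmod w2 \<le> \<beta>2"
    using A1 A2 unfolding transm_le_def w1_def w2_def Q_def by auto
  have Qw: "cmod (Q * w1 * w2) \<le> cmod Q * \<beta>1 * \<beta>2"
    unfolding norm_mult using w1b w2b b1 by (intro mult_mono mult_left_mono) auto
  have Dlow: "cmod (1 + Q * w1 * w2) \<ge> 1 - cmod Q * \<beta>1 * \<beta>2"
    using norm_triangle_ineq4[of "1 + Q * w1 * w2" "Q * w1 * w2"] Qw by simp
  have Nup: "cmod (w1 + w2 + (Q - 1) * w1 * w2) \<le> \<beta>1 + \<beta>2 + (cmod Q + 1) * \<beta>1 * \<beta>2"
  proof -
    have "cmod ((Q - 1) * w1 * w2) \<le> (cmod Q + 1) * \<beta>1 * \<beta>2"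
      unfolding norm_mult using norm_triangle_ineq4[of Q 1] w1b w2b b1
      by (intro mult_mono) auto
    then show ?thesis using norm_triangle_ineq[of "w1 + w2" "(Q - 1) * w1 * w2"]
      norm_triangle_ineq[of w1 w2] w1b w2b by linarith
  qed
  have D: "1 + Q * w1 * w2 \<noteq> 0" using Dlow R unfolding Q_def by auto
  have w: "w1 \<noteq> 1" "w2 \<noteq> 1" using w1b w2b b1 b2 by auto
  have Q: "Q + 1 \<noteq> 0" using q0 unfolding Q_def by simp
  note eq = transm_mult_eq[OF n1 n2 w[unfolded w1_def w2_def] D[unfolded w1_def w2_def] Q,
      folded w1_def w2_def]
  have "cmod ((w1 + w2 + (Q - 1) * w1 * w2) / (1 + Q * w1 * w2))
      \<le> (\<beta>1 + \<beta>2 + (cmod Q + 1) * \<beta>1 * \<beta>2) / (1 - cmod Q * \<beta>1 * \<beta>2)"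
    unfolding norm_divide using Nup Dlow R order_trans[OF norm_ge_zero Nup]
    unfolding Q_def by (intro frac_le) auto
  then show ?thesis unfolding transm_le_def using eq unfolding Q_def by simp
qed

text \<open>The quadratic f(y) = |y - 1|^2 - \<rho>^2 |y + Q|^2 is convex for \<rho> \<le> 1 and vanishes at
  y = 0 when \<rho> |Q| = 1; so f(y) \<le> 0 implies f(s y) \<le> 0 for 0 \<le> s \<le> 1.\<close>

lemma apollonius_disc_scale:
  fixes a b c d \<rho> s :: real
  assumes f: "(a - 1)\<^sup>2 + b\<^sup>2 \<le> \<rho>\<^sup>2 * ((a + c)\<^sup>2 + (b + d)\<^sup>2)"
    and \<rho>: "\<rho>\<^sup>2 * (c\<^sup>2 + d\<^sup>2) = 1" "\<rho>\<^sup>2 \<le> 1" and s: "0 \<le> s" "s \<le> 1"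
  shows "(s * a - 1)\<^sup>2 + (s * b)\<^sup>2 \<le> \<rho>\<^sup>2 * ((s * a + c)\<^sup>2 + (s * b + d)\<^sup>2)"
proof -
  have "(s * a - 1)\<^sup>2 + (s * b)\<^sup>2 - \<rho>\<^sup>2 * ((s * a + c)\<^sup>2 + (s * b + d)\<^sup>2) =
      s * ((a - 1)\<^sup>2 + b\<^sup>2 - \<rho>\<^sup>2 * ((a + c)\<^sup>2 + (b + d)\<^sup>2)) + (s\<^sup>2 - s) * (a\<^sup>2 + b\<^sup>2) * (1 - \<rho>\<^sup>2)
      + (1 - s) * (1 - \<rho>\<^sup>2 * (c\<^sup>2 + d\<^sup>2))"
    by (simp add: power2_eq_square algebra_simps)
  moreover have "s * ((a - 1)\<^sup>2 + b\<^sup>2 - \<rho>\<^sup>2 * ((a + c)\<^sup>2 + (b + d)\<^sup>2)) \<le> 0"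
    using f s by (simp add: mult_nonneg_nonpos)
  moreover have "(s\<^sup>2 - s) * (a\<^sup>2 + b\<^sup>2) * (1 - \<rho>\<^sup>2) \<le> 0"
    using s \<rho>(2) by (intro mult_nonpos_nonneg) (auto simp: power2_eq_square mult_left_le)
  ultimately show ?thesis using \<rho>(1) by simp
qed

lemma transm_le_scale:
  assumes A: "transm_le q \<beta> y" and b: "\<beta> \<le> 1 / cmod (q - 1)" and R: "cmod (q - 1) > 1"
    and s: "0 \<le> s" "s \<le> 1"
  shows "transm_le q (1 / cmod (q - 1)) (of_real s * y)"
proof -
  define Q where "Q = q - 1"
  define \<rho> where "\<rho> = 1 / cmod Q"
  have Q1: "cmod Q > 1" using R unfolding Q_def .
  have \<rho>: "0 < \<rho>" "\<rho>\<^sup>2 \<le> 1" "\<rho>\<^sup>2 * ((Re Q)\<^sup>2 + (Im Q)\<^sup>2) = 1"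
  proof -
    have "Q \<noteq> 0" "(cmod Q)\<^sup>2 \<ge> 1" using Q1 by (auto simp: one_le_power)
    then show "0 < \<rho>" "\<rho>\<^sup>2 \<le> 1" "\<rho>\<^sup>2 * ((Re Q)\<^sup>2 + (Im Q)\<^sup>2) = 1"
      unfolding \<rho>_def cmod_power2[symmetric] by (simp_all add: power_divide)
  qed
  have n: "y + Q \<noteq> 0" using A unfolding transm_le_def Q_def by auto
  have "cmod (y - 1) / cmod (y + Q) \<le> \<rho>"
    using A b unfolding transm_le_def Q_def \<rho>_def by (simp add: norm_divide)
  then have "cmod (y - 1) \<le> \<rho> * cmod (y + Q)" using n by (simp add: divide_le_eq)
  then have "cmod (y - 1) ^ 2 \<le> \<rho>\<^sup>2 * cmod (y + Q) ^ 2"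
    by (metis norm_ge_zero power_mono power_mult_distrib)
  then have "(Re y - 1)\<^sup>2 + (Im y)\<^sup>2 \<le> \<rho>\<^sup>2 * ((Re y + Re Q)\<^sup>2 + (Im y + Im Q)\<^sup>2)"
    by (simp add: cmod_power2)
  from apollonius_disc_scale[OF this \<rho>(3,2) s]
  have "cmod (of_real s * y - 1) ^ 2 \<le> (\<rho> * cmod (of_real s * y + Q)) ^ 2"
    by (simp add: cmod_power2 power_mult_distrib)
  then have F: "cmod (of_real s * y - 1) \<le> \<rho> * cmod (of_real s * y + Q)"
    by (rule power2_le_imp_le) (use \<rho> in simp)
  have nz: "of_real s * y + Q \<noteq> 0"
  proof
    assume h: "of_real s * y + Q = 0"
    then have "of_real s * y = 1" using F by simp
    then show False using h R unfolding Q_def by (simp add: add_eq_0_iff)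
  qed
  then have "cmod ((of_real s * y - 1) / (of_real s * y + Q)) \<le> \<rho>"
    unfolding norm_divide using F by (simp add: divide_le_eq mult.commute)
  then show ?thesis unfolding transm_le_def using nz unfolding Q_def \<rho>_def by simp
qed

lemma transm_le_series:
  assumes A1: "transm_le q \<rho> (1 + v1)" and A2: "transm_le q \<rho> (1 + v2)" and \<rho>: "0 \<le> \<rho>" "\<rho> < 1"
  shows "q + v1 + v2 \<noteq> 0" and "transm_le q (\<rho>\<^sup>2) (1 + v1 * v2 / (q + v1 + v2))"
proof -
  have n1: "q + v1 \<noteq> 0" and t1: "cmod (v1 / (q + v1)) \<le> \<rho>"
    and n2: "q + v2 \<noteq> 0" and t2: "cmod (v2 / (q + v2)) \<le> \<rho>"
    using A1 A2 by (simp_all add: transm_le_iff)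
  have tt: "cmod (v1 / (q + v1) * (v2 / (q + v2))) \<le> \<rho>\<^sup>2"
    unfolding norm_mult power2_eq_square using t1 t2 \<rho> by (intro mult_mono) auto
  have prod: "(q + v1) * (q + v2) = q * (q + v1 + v2) + v1 * v2" by (simp add: algebra_simps)
  show ne: "q + v1 + v2 \<noteq> 0"
  proof
    assume "q + v1 + v2 = 0"
    then have E: "(q + v1) * (q + v2) = v1 * v2" using prod by simp
    moreover have "v1 * v2 \<noteq> 0" using E n1 n2 by (metis mult_eq_0_iff)
    ultimately have "v1 / (q + v1) * (v2 / (q + v2)) = 1" by simp
    moreover have "\<rho>\<^sup>2 < 1" using \<rho> by (simp add: abs_square_less_1)
    ultimately show False using tt by simp
  qed
  define u where "u = v1 * v2 / (q + v1 + v2)"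
  have qu: "q + u = (q + v1) * (q + v2) / (q + v1 + v2)"
    unfolding u_def prod using ne by (simp add: field_simps)
  then have "q + u \<noteq> 0" and "u / (q + u) = v1 / (q + v1) * (v2 / (q + v2))"
    using ne n1 n2 unfolding u_def divide_divide_times_eq by (simp_all add: ac_simps)
  then show "transm_le q (\<rho>\<^sup>2) (1 + v1 * v2 / (q + v1 + v2))"
    unfolding transm_le_iff u_def[symmetric] using tt by simp
qed

lemma level_radius_mult:
  assumes R: "R > 1" and Y1: "1 \<le> Y1" and Y2: "1 \<le> Y2" and Y12: "Y1 * Y2 < R"
  shows "R * level_radius R Y1 * level_radius R Y2 < 1"
    "level_radius R (Y1 * Y2) = (level_radius R Y1 + level_radius R Y2 +
       (R + 1) * level_radius R Y1 * level_radius R Y2) / (1 - R * level_radius R Y1 * level_radius R Y2)"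
proof -
  have Y1R: "Y1 < R" using Y12 Y2 Y1 by (smt (verit) mult_le_cancel_left1)
  have Y2R: "Y2 < R" using Y12 Y2 Y1 by (smt (verit) mult_le_cancel_right1)
  define A where "A = R - Y1"
  define B where "B = R - Y2"
  define b1 where "b1 = level_radius R Y1"
  define b2 where "b2 = level_radius R Y2"
  have A0: "A > 0" and B0: "B > 0" unfolding A_def B_def using Y1R Y2R by auto
  have hb1: "b1 * A = Y1 - 1" unfolding b1_def A_def level_radius_def using A0 unfolding A_def by simp
  have hb2: "b2 * B = Y2 - 1" unfolding b2_def B_def level_radius_def using B0 unfolding B_def by simp
  have idD: "(1 - R * b1 * b2) * (A * B) = (R - 1) * (R - Y1 * Y2)"
  proof -
    have "(1 - R * b1 * b2) * (A * B) = A * B - R * (b1 * A) * (b2 * B)" by (simp add: algebra_simps)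
    also have "\<dots> = (R - 1) * (R - Y1 * Y2)" by (simp only: hb1 hb2) (simp add: A_def B_def algebra_simps)
    finally show ?thesis .
  qed
  have idN: "(b1 + b2 + (R + 1) * b1 * b2) * (A * B) = (R - 1) * (Y1 * Y2 - 1)"
  proof -
    have "(b1 + b2 + (R + 1) * b1 * b2) * (A * B) = (b1 * A) * B + (b2 * B) * A + (R + 1) * (b1 * A) * (b2 * B)"
      by (simp add: algebra_simps)
    also have "\<dots> = (R - 1) * (Y1 * Y2 - 1)" by (simp only: hb1 hb2) (simp add: A_def B_def algebra_simps)
    finally show ?thesis .
  qed
  have AB: "A * B > 0" using A0 B0 by simp
  have pos: "(R - 1) * (R - Y1 * Y2) > 0" using R Y12 by simp
  then have D: "1 - R * b1 * b2 > 0" using idD AB by (metis zero_less_mult_pos2)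
  then show "R * level_radius R Y1 * level_radius R Y2 < 1" unfolding b1_def b2_def by simp
  have "(b1 + b2 + (R + 1) * b1 * b2) / (1 - R * b1 * b2) =
      ((b1 + b2 + (R + 1) * b1 * b2) * (A * B)) / ((1 - R * b1 * b2) * (A * B))"
    using A0 B0 by (intro mult_divide_mult_cancel_right[symmetric]) simp
  also have "\<dots> = ((R - 1) * (Y1 * Y2 - 1)) / ((R - 1) * (R - Y1 * Y2))" unfolding idD idN ..
  also have "\<dots> = level_radius R (Y1 * Y2)" unfolding level_radius_def using R by simp
  finally show "level_radius R (Y1 * Y2) = (level_radius R Y1 + level_radius R Y2 +
       (R + 1) * level_radius R Y1 * level_radius R Y2) / (1 - R * level_radius R Y1 * level_radius R Y2)"
    unfolding b1_def b2_def by simp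
qed

lemma level_radius_mono: "1 \<le> Y \<Longrightarrow> Y \<le> Y' \<Longrightarrow> Y' < R \<Longrightarrow> level_radius R Y \<le> level_radius R Y'"
  unfolding level_radius_def by (intro frac_le) auto

lemma level_radius_nonneg: "1 \<le> Y \<Longrightarrow> Y < R \<Longrightarrow> 0 \<le> level_radius R Y"
  unfolding level_radius_def by simp

lemma level_radius_top: assumes "R > 1" shows "level_radius R (2 / (1 + 1 / R)) = 1 / R"
proof -
  have "1 < R * R" using assms by (metis less_1_mult)
  then have "R * R \<noteq> 1" by simp
  then show ?thesis unfolding level_radius_def using assms by (simp add: field_simps)
qed


section \<open>The reduction invariant\<close>

locale sp_zero_free =
  fixes q :: complex and L :: nat and X :: real
  assumes L_ge_2: "L \<ge> 2" and cmod_gt_1: "cmod (q - 1) > 1" and X_gt_1: "X > 1"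
    and X_pow: "X ^ (L - 1) = 2 / (1 + 1 / cmod (q - 1))"
    and rho_sq_le: "(1 / cmod (q - 1))\<^sup>2 \<le> level_radius (cmod (q - 1)) X"
begin

text \<open>The invariant of the reduction: an edge standing for k edge-disjoint strands of the
  original graph carries a weight y = 1 + v in the set [0,1] \<cdot> D(\<beta>), where \<beta> = level_radius
  |q - 1| (X^k) and D(\<beta>) is the disc of weights with transmissivity at most \<beta>.\<close>

definition admissible :: "nat \<Rightarrow> complex \<Rightarrow> bool" where
  "admissible k y \<longleftrightarrow> (\<exists>s z. 0 \<le> s \<and> s \<le> 1 \<and>
     transm_le q (level_radius (cmod (q - 1)) (X ^ k)) z \<and> y = of_real s * z)"

lemma q_nonzero: "q \<noteq> 0"
  using cmod_gt_1 by auto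

lemma rho_pos_lt_1: "0 < 1 / cmod (q - 1)" "1 / cmod (q - 1) < 1"
  using cmod_gt_1 by (auto simp: divide_less_eq_1)

lemma power_X_bounds:
  assumes "k \<le> L - 1"
  shows "1 \<le> X ^ k" "X ^ k \<le> X ^ (L - 1)" "X ^ (L - 1) < cmod (q - 1)"
proof -
  show "1 \<le> X ^ k" "X ^ k \<le> X ^ (L - 1)" using X_gt_1 assms by (simp_all add: power_increasing)
  have "q \<noteq> 1" "cmod (q - 1) > 0" using cmod_gt_1 by auto
  then have "1 + 1 / cmod (q - 1) > 0" "2 < cmod (q - 1) * (1 + 1 / cmod (q - 1))"
    using cmod_gt_1 by (simp_all add: add_pos_pos distrib_left)
  then show "X ^ (L - 1) < cmod (q - 1)" unfolding X_pow by (simp add: divide_less_eq mult.commute)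
qed

lemma level_radius_power_X:
  assumes "k \<le> L - 1"
  shows "0 \<le> level_radius (cmod (q - 1)) (X ^ k)"
    and "level_radius (cmod (q - 1)) (X ^ k) \<le> 1 / cmod (q - 1)"
proof -
  note bounds = power_X_bounds[OF assms]
  show "0 \<le> level_radius (cmod (q - 1)) (X ^ k)" using bounds by (intro level_radius_nonneg) auto
  have "level_radius (cmod (q - 1)) (X ^ k) \<le> level_radius (cmod (q - 1)) (X ^ (L - 1))"
    using bounds by (intro level_radius_mono) auto
  also have "\<dots> = 1 / cmod (q - 1)" unfolding X_pow using level_radius_top cmod_gt_1 by simp
  finally show "level_radius (cmod (q - 1)) (X ^ k) \<le> 1 / cmod (q - 1)" .
qed

lemma admissibleI: "transm_le q (level_radius (cmod (q - 1)) (X ^ k)) y \<Longrightarrow> admissible k y"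
  unfolding admissible_def by (intro exI[of _ "1::real"] exI[of _ y] conjI) auto

lemma admissible_transm_le:
  assumes "admissible k y" "k \<le> L - 1"
  shows "transm_le q (1 / cmod (q - 1)) y"
proof -
  obtain s z where "0 \<le> s" "s \<le> 1" "transm_le q (level_radius (cmod (q - 1)) (X ^ k)) z"
    "y = of_real s * z"
    using assms unfolding admissible_def by auto
  then show ?thesis
    using transm_le_scale level_radius_power_X(2)[OF assms(2)] cmod_gt_1 by blast
qed

lemma admissible_add_nonzero:
  assumes "admissible k (1 + v)" "k \<le> L - 1"
  shows "q + v \<noteq> 0"
  using admissible_transm_le[OF assms] by (simp add: transm_le_iff)

lemma admissible_mult:
  assumes "admissible k1 y1" "admissible k2 y2" "k1 + k2 \<le> L - 1"
  shows "admissible (k1 + k2) (y1 * y2)"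
proof -
  define R where "R = cmod (q - 1)"
  obtain s1 z1 where sz1: "0 \<le> s1" "s1 \<le> 1" "transm_le q (level_radius R (X ^ k1)) z1" "y1 = of_real s1 * z1"
    using assms unfolding admissible_def R_def by auto
  obtain s2 z2 where sz2: "0 \<le> s2" "s2 \<le> 1" "transm_le q (level_radius R (X ^ k2)) z2" "y2 = of_real s2 * z2"
    using assms unfolding admissible_def R_def by auto
  have b1: "0 \<le> level_radius R (X ^ k1)" "level_radius R (X ^ k1) < 1"
    and b2: "0 \<le> level_radius R (X ^ k2)" "level_radius R (X ^ k2) < 1"
    using level_radius_power_X[of k1] level_radius_power_X[of k2] rho_pos_lt_1(2) assms(3)
    unfolding R_def by fastforce+
  have Y12: "X ^ k1 * X ^ k2 < R" using power_X_bounds[OF assms(3)] unfolding R_def by (simp add: power_add)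
  note comb = level_radius_mult[of R "X ^ k1" "X ^ k2"]
  have "R * level_radius R (X ^ k1) * level_radius R (X ^ k2) < 1"
    using comb cmod_gt_1 Y12 X_gt_1 unfolding R_def by auto
  then have "transm_le q (level_radius R (X ^ k1 * X ^ k2)) (z1 * z2)"
    using transm_le_mult[OF sz1(3) sz2(3) b1 b2 _ q_nonzero] comb cmod_gt_1 Y12 X_gt_1
    unfolding R_def by simp
  moreover have "y1 * y2 = of_real (s1 * s2) * (z1 * z2)" using sz1 sz2 by simp
  moreover have "0 \<le> s1 * s2" "s1 * s2 \<le> 1" using sz1 sz2 by (auto intro: mult_le_one)
  ultimately show ?thesis unfolding admissible_def R_def power_add by blast
qed

lemma transm_le_rho_mult_add_nonzero:
  assumes "transm_le q (1 / cmod (q - 1)) y1" "transm_le q (1 / cmod (q - 1)) y2"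
  shows "y1 * y2 + (q - 1) \<noteq> 0"
proof -
  have "cmod (q - 1) * (1 / cmod (q - 1)) * (1 / cmod (q - 1)) < 1" using rho_pos_lt_1 cmod_gt_1 by simp
  then show ?thesis
    using transm_le_mult[OF assms _ _ _ _ _ q_nonzero] rho_pos_lt_1 unfolding transm_le_def by auto
qed

lemma admissible_series:
  assumes "transm_le q (1 / cmod (q - 1)) (1 + v1)" "transm_le q (1 / cmod (q - 1)) (1 + v2)"
  shows "q + v1 + v2 \<noteq> 0" and "admissible 1 (1 + v1 * v2 / (q + v1 + v2))"
proof -
  show "q + v1 + v2 \<noteq> 0" using transm_le_series(1)[OF assms] rho_pos_lt_1 by auto
  have "transm_le q ((1 / cmod (q - 1))\<^sup>2) (1 + v1 * v2 / (q + v1 + v2))"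
    using transm_le_series(2)[OF assms] rho_pos_lt_1 by auto
  then have "transm_le q (level_radius (cmod (q - 1)) (X ^ 1)) (1 + v1 * v2 / (q + v1 + v2))"
    using transm_le_mono rho_sq_le by simp
  then show "admissible 1 (1 + v1 * v2 / (q + v1 + v2))"
    by (rule admissibleI)
qed

text \<open>k f counts the edges of the original graph that the edge f stands for; only non-bridges
  need admissible weights, since bridges factor out of Z.\<close>

definition admissible_weighting :: "'v set \<Rightarrow> 'e set \<Rightarrow> ('e \<Rightarrow> 'v \<times> 'v) \<Rightarrow> ('e \<Rightarrow> nat) \<Rightarrow>
    ('e \<Rightarrow> complex) \<Rightarrow> bool" where
  "admissible_weighting V E ends k v \<longleftrightarrow> (\<forall>f\<in>E. 1 \<le> k f) \<and> flow_bounded L V E ends k \<and>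
     (\<forall>f\<in>E. q + v f \<noteq> 0 \<and> (nonbridge V E ends f \<longrightarrow> admissible (k f) (1 + v f)))"

lemma admissible_weighting_series_reduce:
  assumes e: "e \<in> E" and ab: "ends e = (a, b)" and e': "e' \<notin> E"
    and adm: "admissible_weighting (insert w V) (insert e' E) (ends(e := (a, w), e' := (w, b))) k v"
    and x: "q + x \<noteq> 0" "nonbridge V E ends e \<Longrightarrow> admissible 1 (1 + x)"
  shows "admissible_weighting V E ends (k(e := 1)) (v(e := x))"
proof -
  have k1: "\<forall>f\<in>insert e' E. 1 \<le> k f"
    and fl: "flow_bounded L (insert w V) (insert e' E) (ends(e := (a, w), e' := (w, b))) k"
    and H: "\<forall>f\<in>insert e' E. q + v f \<noteq> 0 \<and>
      (nonbridge (insert w V) (insert e' E) (ends(e := (a, w), e' := (w, b))) f \<longrightarrow> admissible (k f) (1 + v f))"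
    using adm unfolding admissible_weighting_def by auto
  have "flow_bounded L V E ends (k(e := 1))"
    using flow_bounded_series[OF fl e e' ab] k1 e by auto
  moreover have "admissible (k f) (1 + v f)" if "f \<in> E" "f \<noteq> e" "nonbridge V E ends f" for f
    using H nonbridge_subdivide_other[OF e e' ab that] that by auto
  ultimately show ?thesis using k1 H x unfolding admissible_weighting_def by auto
qed

lemma tutteZ_nonzero_series_step:
  assumes sp: "series_parallel V E ends" and e: "e \<in> E" and ab: "ends e = (a, b)"
    and w: "w \<notin> V" and e': "e' \<notin> E"
    and IH: "\<And>k v. admissible_weighting V E ends k v \<Longrightarrow> tutteZ V E ends q v \<noteq> 0"
    and adm: "admissible_weighting (insert w V) (insert e' E) (ends(e := (a, w), e' := (w, b))) k v"
  shows "tutteZ (insert w V) (insert e' E) (ends(e := (a, w), e' := (w, b))) q v \<noteq> 0"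
proof -
  define ends' where "ends' = ends(e := (a, w), e' := (w, b))"
  have "series_parallel (insert w V) (insert e' E) ends'"
    unfolding ends'_def using sp e ab w e' by (rule sp_series)
  then have mg': "multigraph (insert w V) (insert e' E) ends'" and ll': "loopless (insert e' E) ends'"
    using series_parallel_multigraph_loopless by auto
  have mg: "multigraph V E ends" using series_parallel_multigraph_loopless[OF sp] by auto
  have k1: "\<forall>f\<in>insert e' E. 1 \<le> k f" and fl: "flow_bounded L (insert w V) (insert e' E) ends' k"
    and H: "\<forall>f\<in>insert e' E. q + v f \<noteq> 0 \<and>
      (nonbridge (insert w V) (insert e' E) ends' f \<longrightarrow> admissible (k f) (1 + v f))"
    using adm unfolding admissible_weighting_def ends'_def by auto
  have reduced: "tutteZ V E ends q (v(e := x)) \<noteq> 0"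
    if "q + x \<noteq> 0" "nonbridge V E ends e \<Longrightarrow> admissible 1 (1 + x)" for x
    using IH admissible_weighting_series_reduce[OF e ab e' adm that] by blast
  show ?thesis
  proof (cases "nonbridge V E ends e")
    case True
    note nb' = nonbridge_subdivide_new[OF e e' ab True, of w, folded ends'_def]
    have "k e \<le> L - 1" "k e' \<le> L - 1"
      using flow_bounded_nonbridge_lt[OF mg' ll' fl k1] nb' e by fastforce+
    moreover have "admissible (k e) (1 + v e)" "admissible (k e') (1 + v e')" using H nb' e by auto
    ultimately have A: "transm_le q (1 / cmod (q - 1)) (1 + v e)" "transm_le q (1 / cmod (q - 1)) (1 + v e')"
      using admissible_transm_le by blast+
    define u where "u = v e * v e' / (q + v e + v e')"
    note ne = admissible_series(1)[OF A] and u = admissible_series(2)[OF A, folded u_def]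
    have "q + u \<noteq> 0" using admissible_add_nonzero[OF u] L_ge_2 by simp
    then have "tutteZ V E ends q (v(e := u)) \<noteq> 0" using reduced u by blast
    then show ?thesis using tutteZ_series[OF mg e ab w e' ne] ne unfolding u_def by simp
  next
    case False
    then have "(a, b) \<notin> conn V (E - {e}) ends" using ab unfolding nonbridge_def by simp
    note factor = tutteZ_series_bridge[OF mg e ab w e' this, of q v]
    have "tutteZ V E ends q (v(e := 0)) \<noteq> 0" using reduced[of 0] q_nonzero False by simp
    moreover have "q + v e \<noteq> 0" "q + v e' \<noteq> 0" using H e by auto
    ultimately show ?thesis using factor by auto
  qed
qed

lemma admissible_weighting_parallel_reduce:
  assumes e: "e \<in> E" and e': "e' \<notin> E"
    and adm: "admissible_weighting V (insert e' E) (ends(e' := ends e)) k v"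
    and x: "q + x \<noteq> 0" "nonbridge V E ends e \<Longrightarrow> admissible (k e + k e') (1 + x)"
  shows "admissible_weighting V E ends (k(e := k e + k e')) (v(e := x))"
proof -
  have k1: "\<forall>f\<in>insert e' E. 1 \<le> k f"
    and fl: "flow_bounded L V (insert e' E) (ends(e' := ends e)) k"
    and H: "\<forall>f\<in>insert e' E. q + v f \<noteq> 0 \<and>
      (nonbridge V (insert e' E) (ends(e' := ends e)) f \<longrightarrow> admissible (k f) (1 + v f))"
    using adm unfolding admissible_weighting_def by auto
  have "flow_bounded L V E ends (k(e := k e + k e'))" by (rule flow_bounded_parallel[OF fl e e'])
  moreover have "admissible (k f) (1 + v f)" if "f \<in> E" "nonbridge V E ends f" for f
    using H nonbridge_parallel_other[OF e' that] that by auto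
  ultimately show ?thesis using k1 H x unfolding admissible_weighting_def by auto
qed

lemma tutteZ_nonzero_parallel_step:
  assumes sp: "series_parallel V E ends" and e: "e \<in> E" and e': "e' \<notin> E"
    and IH: "\<And>k v. admissible_weighting V E ends k v \<Longrightarrow> tutteZ V E ends q v \<noteq> 0"
    and adm: "admissible_weighting V (insert e' E) (ends(e' := ends e)) k v"
  shows "tutteZ V (insert e' E) (ends(e' := ends e)) q v \<noteq> 0"
proof -
  define ends' where "ends' = ends(e' := ends e)"
  define x where "x = v e + v e' + v e * v e'"
  have "series_parallel V (insert e' E) ends'" unfolding ends'_def using sp e e' by (rule sp_parallel)
  then have mg': "multigraph V (insert e' E) ends'" and ll': "loopless (insert e' E) ends'"
    using series_parallel_multigraph_loopless by auto
  have mg: "multigraph V E ends" and ll: "loopless E ends"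
    using series_parallel_multigraph_loopless[OF sp] by auto
  have k1: "\<forall>f\<in>insert e' E. 1 \<le> k f" and fl: "flow_bounded L V (insert e' E) ends' k"
    and H: "\<forall>f\<in>insert e' E. q + v f \<noteq> 0 \<and>
      (nonbridge V (insert e' E) ends' f \<longrightarrow> admissible (k f) (1 + v f))"
    using adm unfolding admissible_weighting_def ends'_def by auto
  note nb' = nonbridge_parallel_new[OF mg e e', folded ends'_def]
  have "k e \<le> L - 1" "k e' \<le> L - 1"
    using flow_bounded_nonbridge_lt[OF mg' ll' fl k1] nb' e by fastforce+
  moreover have C: "admissible (k e) (1 + v e)" "admissible (k e') (1 + v e')" using H nb' e by auto
  ultimately have A: "transm_le q (1 / cmod (q - 1)) (1 + v e)" "transm_le q (1 / cmod (q - 1)) (1 + v e')"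
    using admissible_transm_le by blast+
  have y: "1 + x = (1 + v e) * (1 + v e')" unfolding x_def by (simp add: algebra_simps)
  have "q + x \<noteq> 0"
    using transm_le_rho_mult_add_nonzero[OF A] unfolding y[symmetric] by (simp add: algebra_simps)
  moreover have "admissible (k e + k e') (1 + x)" if nb: "nonbridge V E ends e"
  proof -
    have "flow_bounded L V E ends (k(e := k e + k e'))"
      using flow_bounded_parallel[OF fl[unfolded ends'_def] e e'] .
    moreover have "\<forall>f\<in>E. 1 \<le> (k(e := k e + k e')) f" using k1 by auto
    ultimately have "k e + k e' < L" using flow_bounded_nonbridge_lt[OF mg ll _ _ e nb] by fastforce
    then show ?thesis unfolding y by (intro admissible_mult C) simp
  qed
  ultimately have "tutteZ V E ends q (v(e := x)) \<noteq> 0"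
    using IH admissible_weighting_parallel_reduce[OF e e' adm] by blast
  then show ?thesis using tutteZ_parallel[of E e e' V ends q v] mg e e'
    unfolding x_def multigraph_def by simp
qed

theorem tutteZ_nonzero_of_admissible_weighting:
  assumes "series_parallel V E ends" "admissible_weighting V E ends k v"
  shows "tutteZ V E ends q v \<noteq> 0"
  using assms
proof (induction arbitrary: k v rule: series_parallel.induct)
  case (sp_forest V E ends k v)
  then show ?case
    using tutteZ_forest_nonzero[OF sp_forest.hyps q_nonzero] unfolding admissible_weighting_def by auto
next
  case (sp_series V E ends e a b w e' k v)
  show ?case by (rule tutteZ_nonzero_series_step[OF sp_series.hyps sp_series.IH sp_series.prems])
next
  case (sp_parallel V E ends e e' k v)
  show ?case by (rule tutteZ_nonzero_parallel_step[OF sp_parallel.hyps sp_parallel.IH sp_parallel.prems])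
qed

lemma admissible_one_of_real:
  assumes "v \<in> \<real>" "-1 \<le> Re v" "Re v \<le> 0"
  shows "admissible 1 (1 + v)"
proof -
  have "1 + v = of_real (1 + Re v) * 1" using assms(1) by (simp add: complex_is_Real_iff complex_eq_iff)
  moreover have "0 \<le> level_radius (cmod (q - 1)) (X ^ 1)"
    using level_radius_power_X(1)[of 1] L_ge_2 by simp
  ultimately show ?thesis
    unfolding admissible_def using assms transm_le_one[OF q_nonzero]
    by (intro exI[of _ "1 + Re v"] exI[of _ "1::complex"] conjI) auto
qed

lemma admissible_one_of_transm:
  assumes "q + v \<noteq> 0"
    and "cmod (v / (q + v)) \<le> 1 / cmod (q - 1) * (X - 1) / (1 - 1 / cmod (q - 1) * X)"
  shows "admissible 1 (1 + v)"
proof -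
  have "1 \<le> L - 1" using L_ge_2 by simp
  then have "X < cmod (q - 1)" using power_X_bounds(2,3)[of 1] by simp
  then have "1 / cmod (q - 1) * (X - 1) / (1 - 1 / cmod (q - 1) * X) = level_radius (cmod (q - 1)) X"
    unfolding level_radius_def using cmod_gt_1 by (auto simp: field_simps)
  then have "transm_le q (level_radius (cmod (q - 1)) (X ^ 1)) (1 + v)"
    using assms by (simp add: transm_le_iff)
  then show ?thesis by (rule admissibleI)
qed

lemma tutteZ_nonzero:
  assumes sp: "series_parallel V E ends" and "maxmaxflow V E ends \<le> L"
    and adm: "\<forall>e\<in>E. admissible 1 (1 + v e)"
  shows "tutteZ V E ends q v \<noteq> 0"
proof (rule tutteZ_nonzero_of_admissible_weighting[OF sp])
  have "multigraph V E ends" using series_parallel_multigraph_loopless[OF sp] by auto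
  then have "flow_bounded L V E ends (\<lambda>_. 1)" using flow_bounded_maxmaxflow assms(2) by blast
  moreover have "q + v e \<noteq> 0" if "e \<in> E" for e
    using admissible_add_nonzero adm that L_ge_2 by fastforce
  ultimately show "admissible_weighting V E ends (\<lambda>_. 1) v"
    unfolding admissible_weighting_def using adm by auto
qed

end


text \<open>For \<rho> = 1/R and X^(L-1) = 2/(1+\<rho>), the defining inequality of rho_star,
  (1+\<rho>)^L \<le> 2 (1+\<rho>^2)^(L-1), says (1+\<rho>)/(1+\<rho>^2) \<le> X, which is \<rho>^2 \<le> level_radius R X:
  a series pair of strands lands again in the admissible set of one strand.\<close>

lemma rho_sq_le_level_radius:
  fixes R X :: real
  assumes L: "L \<ge> 2" and R: "R > 1" and X: "0 < X" "X < R"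
    and XL: "X ^ (L - 1) = 2 / (1 + 1 / R)"
    and ineq: "(1 + 1 / R) ^ L \<le> 2 * (1 + (1 / R)\<^sup>2) ^ (L - 1)"
  shows "(1 / R)\<^sup>2 \<le> level_radius R X"
proof -
  define \<rho> where "\<rho> = 1 / R"
  have \<rho>: "0 < \<rho>" "\<rho> * R = 1" unfolding \<rho>_def using R by auto
  have pos: "(1 + \<rho>\<^sup>2) ^ (L - 1) > 0" "1 + \<rho> > 0" using \<rho> by (simp_all add: add_pos_nonneg)
  have LL: "L = Suc (L - 1)" "L - 1 = Suc (L - 2)" using L by simp_all
  have "(1 + \<rho>) ^ L = (1 + \<rho>) * (1 + \<rho>) ^ (L - 1)" by (subst LL(1)) simp
  then have "(1 + \<rho>) * (1 + \<rho>) ^ (L - 1) \<le> 2 * (1 + \<rho>\<^sup>2) ^ (L - 1)"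
    using ineq unfolding \<rho>_def[symmetric] by simp
  then have "(1 + \<rho>) ^ (L - 1) / (1 + \<rho>\<^sup>2) ^ (L - 1) \<le> 2 / (1 + \<rho>)"
    using pos by (simp add: field_simps)
  then have "((1 + \<rho>) / (1 + \<rho>\<^sup>2)) ^ (L - 1) \<le> X ^ (L - 1)"
    unfolding XL \<rho>_def[symmetric] by (simp add: power_divide)
  then have "((1 + \<rho>) / (1 + \<rho>\<^sup>2)) ^ Suc (L - 2) \<le> X ^ Suc (L - 2)" unfolding LL(2) .
  then have "(1 + \<rho>) / (1 + \<rho>\<^sup>2) \<le> X" by (rule power_le_imp_le_base) (use X in simp)
  then have "1 + \<rho> \<le> X * (1 + \<rho>\<^sup>2)" using pos by (simp add: divide_le_eq add_pos_nonneg)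
  then have "\<rho>\<^sup>2 * (R - X) \<le> X - 1" using \<rho> by (simp add: power2_eq_square algebra_simps)
  then show ?thesis unfolding level_radius_def \<rho>_def[symmetric] using X by (simp add: le_divide_eq)
qed

lemma sp_zero_free_intro:
  assumes L: "L \<ge> 2" and R: "cmod (q - 1) > 1"
    and ineq: "(1 + 1 / cmod (q - 1)) ^ L \<le> 2 * (1 + (1 / cmod (q - 1))\<^sup>2) ^ (L - 1)"
  shows "sp_zero_free q L ((2 / (1 + 1 / cmod (q - 1))) powr (1 / (real L - 1)))"
proof -
  define a where "a = 2 / (1 + 1 / cmod (q - 1))"
  define X where "X = a powr (1 / (real L - 1))"
  have "cmod (q - 1) \<noteq> 0" "cmod (q - 1) + 1 \<noteq> 0" using R by auto
  then have "a = 2 * cmod (q - 1) / (cmod (q - 1) + 1)" unfolding a_def by (simp add: field_simps)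
  moreover have "cmod (q - 1) * 2 < cmod (q - 1) * (cmod (q - 1) + 1)"
    by (rule mult_strict_left_mono) (use R in auto)
  ultimately have a: "1 < a" "a < cmod (q - 1)" using R by (simp_all add: less_divide_eq divide_less_eq)
  have X1: "X > 1" unfolding X_def using a L by simp
  have "X ^ (L - 1) = a powr (1 / (real L - 1) * real (L - 1))"
    using X1 a unfolding X_def by (simp add: powr_realpow[symmetric] powr_powr)
  also have "1 / (real L - 1) * real (L - 1) = 1" using L by (simp add: of_nat_diff)
  finally have XL: "X ^ (L - 1) = a" using a by simp
  have "X ^ 1 \<le> X ^ (L - 1)" using X1 L by (intro power_increasing) auto
  then have "X < cmod (q - 1)" using XL a by simp
  then have "(1 / cmod (q - 1))\<^sup>2 \<le> level_radius (cmod (q - 1)) X"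
    using rho_sq_le_level_radius[OF L R _ _ _ ineq] X1 XL unfolding a_def by simp
  then show ?thesis using L R X1 XL unfolding a_def X_def by unfold_locales auto
qed

lemma
  assumes L: "L \<ge> 2"
    and hq: "if L = 2 then cmod (q - 1) > 1 / rho_star L else cmod (q - 1) \<ge> 1 / rho_star L"
  shows cmod_gt_1_of_rho_star: "cmod (q - 1) > 1"
    and rho_ineq_of_rho_star: "(1 + 1 / cmod (q - 1)) ^ L \<le> 2 * (1 + (1 / cmod (q - 1))\<^sup>2) ^ (L - 1)"
proof -
  have "cmod (q - 1) > 1 \<and> (1 + 1 / cmod (q - 1)) ^ L \<le> 2 * (1 + (1 / cmod (q - 1))\<^sup>2) ^ (L - 1)"
  proof (cases "L = 2")
    case True
    have "0 \<le> (1 - 1 / cmod (q - 1))\<^sup>2" by simp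
    then show ?thesis using hq True unfolding rho_star_def
      by (simp add: power2_eq_square algebra_simps)
  next
    case False
    then have L3: "L \<ge> 3" using L by simp
    have R: "cmod (q - 1) \<ge> 1 / rho_star L" using hq False by simp
    have rs: "0 < rho_star L" "rho_star L < 1" using rho_star_pos[OF L3] rho_star_lt_1[OF L3] .
    then have "1 / rho_star L > 1" by simp
    then have R1: "cmod (q - 1) > 1" using R by linarith
    moreover have "1 \<le> rho_star L * cmod (q - 1)" using R rs by (simp add: field_simps)
    then have "1 / cmod (q - 1) \<le> rho_star L" using R1 rs by (simp add: divide_le_eq)
    ultimately show ?thesis using rho_star_ineq[OF L3] by simp
  qed
  then show "cmod (q - 1) > 1" "(1 + 1 / cmod (q - 1)) ^ L \<le> 2 * (1 + (1 / cmod (q - 1))\<^sup>2) ^ (L - 1)"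
    by auto
qed

theorem theorem7p1:
  fixes L :: nat and V :: "'v set" and E :: "'e set" and ends :: "'e \<Rightarrow> 'v \<times> 'v"
    and q :: complex and v :: "'e \<Rightarrow> complex"
  assumes "L \<ge> 2"
    and "multigraph V E ends" and "loopless E ends" and "series_parallel V E ends"
    and "maxmaxflow V E ends \<le> L"
    and hq: "if L = 2 then cmod (q - 1) > 1 / rho_star L else cmod (q - 1) \<ge> 1 / rho_star L"
    and hv: "\<forall>e\<in>E. (v e \<in> \<real> \<and> -1 \<le> Re (v e) \<and> Re (v e) \<le> 0) \<or>
      (q + v e \<noteq> 0 \<and>
        (let \<rho> = 1 / cmod (q - 1); X = (2 / (1 + \<rho>)) powr (1 / (real L - 1));
             B = \<rho> * (X - 1) / (1 - \<rho> * X)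
         in if L = 2 then cmod (v e / (q + v e)) < B else cmod (v e / (q + v e)) \<le> B))"
  shows "tutteZ V E ends q v \<noteq> 0"
proof -
  define X where "X = (2 / (1 + 1 / cmod (q - 1))) powr (1 / (real L - 1))"
  interpret sp_zero_free q L X
    unfolding X_def using sp_zero_free_intro assms(1) cmod_gt_1_of_rho_star[OF assms(1) hq]
      rho_ineq_of_rho_star[OF assms(1) hq] .
  have "admissible 1 (1 + v e)" if "e \<in> E" for e
  proof -
    from hv that consider "v e \<in> \<real>" "-1 \<le> Re (v e)" "Re (v e) \<le> 0"
      | "q + v e \<noteq> 0" "cmod (v e / (q + v e)) \<le> 1 / cmod (q - 1) * (X - 1) / (1 - 1 / cmod (q - 1) * X)"
      unfolding Let_def X_def by (fastforce split: if_splits)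
    then show ?thesis using admissible_one_of_real admissible_one_of_transm by cases
  qed
  then show ?thesis using tutteZ_nonzero assms(4,5) by blast
qed

end
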